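(* For every prime $p$ there is a finite solvable algebra $\mathbf A$ with a Malcev term such that $\mathrm{nuP}_{\mathbf A}=\mathsf{nuDet}_p$.
   Context: A finite algebra has finite universe and finitely many basic operations. An $n$-ary circuit over $\mathbf A$ is a DAG with one output node, sources labelled by variables or constants from $A$, gates labelled by basic operations; size is nodes plus edges. A NuDFA over $\mathbf A$ is $(\{t_n\}_{n\ge1},\iota,S)$ with $t_n$ an $n$-ary circuit, $\iota:\{0,1\}\to A$, $S\subseteq A$, accepting $b\in\{0,1\}^n$ iff $t_n(\iota(b_1),\dots,\iota(b_n))\in S$; polynomial size means size of $t_n$ polynomial in $n$; $\mathrm{nuP}_{\mathbf A}$ is the class of languages over $\{0,1\}$ accepted by polynomial-size NuDFAs over $\mathbf A$. A Malcev term is a ternary term $d$ with $d(x,y,y)=d(y,y,x)=x$; solvability is in the sense of commutator theory. An algebraic branching program (ABP) over $\mathrm{GF}(p)$ is a directed acyclic multigraph with one source and one sink whose edges are labelled by variables or constants of $\mathrm{GF}(p)$; it computes the polynomial equal to the sum over all source–sink paths of the product of the edge labels; its size is the number of vertices plus edges. A $\mathrm{BABP}_p$ gate is labelled by an $n$-variate ABP over $\mathrm{GF}(p)$ and an accepting set $T\subseteq\mathrm{GF}(p)$; on Boolean inputs $b\in\{0,1\}^n$ it outputs 1 iff the ABP's polynomial evaluated at $b$ lies in $T$; its size is that of the ABP. $\mathsf{nuDet}_p$ is the class of languages $L\subseteq\{0,1\}^*$ such that for each $n$, $L\cap\{0,1\}^n$ is recognized by a single $\mathrm{BABP}_p$ gate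 of size polynomial in $n$. *)

theory Defs
  imports Main "HOL-Computational_Algebra.Primes"
begin

text \<open>An algebra with universe a set of naturals (every finite algebra is isomorphic
to one of these) and a finite list of basic operations, each given by its arity and
a function on argument lists.\<close>

record alg =
  univ :: "nat set"
  ops  :: "(nat \<times> (nat list \<Rightarrow> nat)) list"

definition arity :: "alg \<Rightarrow> nat \<Rightarrow> nat" where
  "arity A f = fst (ops A ! f)"

definition opfun :: "alg \<Rightarrow> nat \<Rightarrow> nat list \<Rightarrow> nat" where
  "opfun A f = snd (ops A ! f)"

definition finite_algebra :: "alg \<Rightarrow> bool" where
  "finite_algebra A \<longleftrightarrow> finite (univ A) \<and> univ A \<noteq> {} \<and>
     (\<forall>f < length (ops A). \<forall>xs. length xs = arity A f \<and> set xs \<subseteq> univ A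
        \<longrightarrow> opfun A f xs \<in> univ A)"

datatype trm = TV nat | TAp nat "trm list"

fun wf_trm :: "alg \<Rightarrow> trm \<Rightarrow> bool" where
  "wf_trm A (TV i) = True"
| "wf_trm A (TAp f ts) = (f < length (ops A) \<and> length ts = arity A f \<and> (\<forall>t\<in>set ts. wf_trm A t))"

fun trm_vars :: "trm \<Rightarrow> nat set" where
  "trm_vars (TV i) = {i}"
| "trm_vars (TAp f ts) = (\<Union>t\<in>set ts. trm_vars t)"

fun teval :: "alg \<Rightarrow> (nat \<Rightarrow> nat) \<Rightarrow> trm \<Rightarrow> nat" where
  "teval A env (TV i) = env i"
| "teval A env (TAp f ts) = opfun A f (map (teval A env) ts)"

definition malcev_term :: "alg \<Rightarrow> trm \<Rightarrow> bool" where
  "malcev_term A d \<longleftrightarrow> wf_trm A d \<and> trm_vars d \<subseteq> {0,1,2} \<and>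
     (\<forall>x\<in>univ A. \<forall>y\<in>univ A.
        teval A (\<lambda>i. [x,y,y] ! i) d = x \<and> teval A (\<lambda>i. [y,y,x] ! i) d = x)"

definition has_malcev_term :: "alg \<Rightarrow> bool" where
  "has_malcev_term A \<longleftrightarrow> (\<exists>d. malcev_term A d)"

definition congruence :: "alg \<Rightarrow> (nat \<times> nat) set \<Rightarrow> bool" where
  "congruence A \<theta> \<longleftrightarrow> equiv (univ A) \<theta> \<and>
     (\<forall>f < length (ops A). \<forall>xs ys. length xs = arity A f \<and> length ys = arity A f \<and>
        (\<forall>i < arity A f. (xs ! i, ys ! i) \<in> \<theta>) \<longrightarrow> (opfun A f xs, opfun A f ys) \<in> \<theta>)"

text \<open>Term condition C(alpha, beta; delta): for every term t(x_0..x_{m-1}, y_m, ...),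
tuples a alpha b and c beta d: t(a,c) delta t(a,d) implies t(b,c) delta t(b,d).\<close>

definition centralizes :: "alg \<Rightarrow> (nat \<times> nat) set \<Rightarrow> (nat \<times> nat) set \<Rightarrow> (nat \<times> nat) set \<Rightarrow> bool" where
  "centralizes A \<alpha> \<beta> \<delta> \<longleftrightarrow>
     (\<forall>t m a b c d. wf_trm A t \<and> (\<forall>i. (a i, b i) \<in> \<alpha>) \<and> (\<forall>i. (c i, d i) \<in> \<beta>) \<and>
        (teval A (\<lambda>i. if i < m then a i else c i) t, teval A (\<lambda>i. if i < m then a i else d i) t) \<in> \<delta>
        \<longrightarrow> (teval A (\<lambda>i. if i < m then b i else c i) t, teval A (\<lambda>i. if i < m then b i else d i) t) \<in> \<delta>)"

definition commutator :: "alg \<Rightarrow> (nat \<times> nat) set \<Rightarrow> (nat \<times> nat) set \<Rightarrow> (nat \<times> nat) set" where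
  "commutator A \<alpha> \<beta> = \<Inter> {\<delta>. congruence A \<delta> \<and> centralizes A \<alpha> \<beta> \<delta>}"

fun derived :: "alg \<Rightarrow> nat \<Rightarrow> (nat \<times> nat) set" where
  "derived A 0 = univ A \<times> univ A"
| "derived A (Suc k) = commutator A (derived A k) (derived A k)"

definition solvable_alg :: "alg \<Rightarrow> bool" where
  "solvable_alg A \<longleftrightarrow> (\<exists>k. derived A k = Id_on (univ A))"

text \<open>A circuit is a nonempty list of nodes in topological order; a gate may only use
earlier nodes; the output node is the last one. Size = nodes + edges.\<close>

datatype cnode = CInp nat | CConst nat | CGate nat "nat list"

fun wf_cnode :: "alg \<Rightarrow> nat \<Rightarrow> nat \<Rightarrow> cnode \<Rightarrow> bool" where
  "wf_cnode A n k (CInp j) = (j < n)"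
| "wf_cnode A n k (CConst a) = (a \<in> univ A)"
| "wf_cnode A n k (CGate f args) = (f < length (ops A) \<and> length args = arity A f \<and> (\<forall>i\<in>set args. i < k))"

definition circuit :: "alg \<Rightarrow> nat \<Rightarrow> cnode list \<Rightarrow> bool" where
  "circuit A n c \<longleftrightarrow> c \<noteq> [] \<and> (\<forall>k < length c. wf_cnode A n k (c ! k))"

fun cnode_edges :: "cnode \<Rightarrow> nat" where
  "cnode_edges (CGate f args) = length args"
| "cnode_edges _ = 0"

definition circuit_size :: "cnode list \<Rightarrow> nat" where
  "circuit_size c = length c + sum_list (map cnode_edges c)"

fun cnode_val :: "alg \<Rightarrow> nat list \<Rightarrow> nat list \<Rightarrow> cnode \<Rightarrow> nat" where
  "cnode_val A x vals (CInp j) = x ! j"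
| "cnode_val A x vals (CConst a) = a"
| "cnode_val A x vals (CGate f args) = opfun A f (map (\<lambda>i. vals ! i) args)"

definition circuit_vals :: "alg \<Rightarrow> cnode list \<Rightarrow> nat list \<Rightarrow> nat list" where
  "circuit_vals A c x = foldl (\<lambda>vals nd. vals @ [cnode_val A x vals nd]) [] c"

definition circuit_eval :: "alg \<Rightarrow> cnode list \<Rightarrow> nat list \<Rightarrow> nat" where
  "circuit_eval A c x = last (circuit_vals A c x)"

definition nudfa_accepts :: "alg \<Rightarrow> (nat \<Rightarrow> cnode list) \<Rightarrow> (bool \<Rightarrow> nat) \<Rightarrow> nat set \<Rightarrow> bool list \<Rightarrow> bool" where
  "nudfa_accepts A t \<iota> S w \<longleftrightarrow> circuit_eval A (t (length w)) (map \<iota> w) \<in> S"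

definition nuP :: "alg \<Rightarrow> bool list set set" where
  "nuP A = {L. \<exists>t \<iota> S (c::nat) (k::nat).
      (\<forall>n. circuit A n (t n) \<and> circuit_size (t n) \<le> c * (n + 1) ^ k) \<and>
      \<iota> True \<in> univ A \<and> \<iota> False \<in> univ A \<and> S \<subseteq> univ A \<and>
      L = {w. nudfa_accepts A t \<iota> S w}}"

text \<open>GF(p) is represented by residues {0..<p}. An ABP has vertices 0..nv-1 (topologically
ordered, every edge goes from a smaller to a larger vertex), source 0, sink nv-1, and a
list of labelled edges (a multigraph).\<close>

datatype alab = LVar nat | LConst nat

record abp =
  nv :: nat
  edges :: "(nat \<times> nat \<times> alab) list"

definition wf_abp :: "nat \<Rightarrow> nat \<Rightarrow> abp \<Rightarrow> bool" where
  "wf_abp p n G \<longleftrightarrow> nv G \<ge> 1 \<and>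
     (\<forall>(u, v, l) \<in> set (edges G). u < v \<and> v < nv G \<and>
        (case l of LVar i \<Rightarrow> i < n | LConst a \<Rightarrow> a < p))"

definition abp_size :: "abp \<Rightarrow> nat" where
  "abp_size G = nv G + length (edges G)"

fun abp_walk :: "abp \<Rightarrow> nat \<Rightarrow> nat list \<Rightarrow> bool" where
  "abp_walk G u [] = (u = nv G - 1)"
| "abp_walk G u (e # es) = (e < length (edges G) \<and> fst (edges G ! e) = u \<and>
      abp_walk G (fst (snd (edges G ! e))) es)"

definition abp_paths :: "abp \<Rightarrow> nat list set" where
  "abp_paths G = {es. abp_walk G 0 es}"

fun alab_val :: "bool list \<Rightarrow> alab \<Rightarrow> nat" where
  "alab_val b (LVar i) = (if b ! i then 1 else 0)"
| "alab_val b (LConst a) = a"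

definition abp_value :: "nat \<Rightarrow> abp \<Rightarrow> bool list \<Rightarrow> nat" where
  "abp_value p G b =
     (\<Sum>es\<in>abp_paths G. prod_list (map (\<lambda>e. alab_val b (snd (snd (edges G ! e)))) es)) mod p"

definition nuDet :: "nat \<Rightarrow> bool list set set" where
  "nuDet p = {L. \<exists>(c::nat) (k::nat). \<forall>n. \<exists>G T.
      wf_abp p n G \<and> abp_size G \<le> c * (n + 1) ^ k \<and> T \<subseteq> {0..<p} \<and>
      (\<forall>w. length w = n \<longrightarrow> (w \<in> L \<longleftrightarrow> abp_value p G w \<in> T))}"

end

(*
  The algebra is Z_p x Z_p with the Malcev operation x - y + z and the operation
  (x, y, z) |-> (z1, z2 + x1 * y2). The kernel of the first projection is a central congruence
  and the quotient by it is affine, so the algebra is solvable.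

  A polynomial-size ABP over GF(p) amounts to a polynomial-size linear program: a list of nodes,
  each a linear combination of earlier nodes with coefficients that are input bits or constants.
  A circuit over the algebra runs such a program in the second coordinate, one step s + l * v
  being one application of the second operation. Conversely, in a circuit over the algebra the
  first coordinate of every gate is an affine function of the input bits, and the second one is
  computed by a linear program of linear size, in which the product with an affine first
  coordinate is expanded over the input bits. Accepting sets become polynomials by Fermat's
  little theorem: in GF(p), 1 - (x - t)^(p - 1) is the indicator of x = t.
*)

theory Submission
  imports Defs "HOL-Number_Theory.Residues"
begin

section \<open>The algebra \<open>\<int>\<^sub>p \<times> \<int>\<^sub>p\<close>\<close>

text \<open>The universe of an algebra is a set of naturals, so a pair \<open>(a, b)\<close> is encoded as \<open>a * p + b\<close>.\<close>

definition enc :: "nat \<Rightarrow> nat \<Rightarrow> nat \<Rightarrow> nat" where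
  "enc p a b = a * p + b"

definition hi :: "nat \<Rightarrow> nat \<Rightarrow> nat" where
  "hi p x = x div p mod p"

definition lo :: "nat \<Rightarrow> nat \<Rightarrow> nat" where
  "lo p x = x mod p"

lemma hi_less: "0 < p \<Longrightarrow> hi p x < p"
  by (simp add: hi_def)

lemma lo_less: "0 < p \<Longrightarrow> lo p x < p"
  by (simp add: lo_def)

lemma enc_less: "a < p \<Longrightarrow> b < p \<Longrightarrow> enc p a b < p * p"
proof -
  assume "a < p" "b < p"
  then have "a * p + b < (a + 1) * p" by simp
  also have "\<dots> \<le> p * p" using \<open>a < p\<close> by (intro mult_right_mono) auto
  finally show ?thesis unfolding enc_def .
qed

lemma hi_enc [simp]: "a < p \<Longrightarrow> b < p \<Longrightarrow> hi p (enc p a b) = a"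
  by (simp add: hi_def enc_def)

lemma lo_enc [simp]: "b < p \<Longrightarrow> lo p (enc p a b) = b"
  by (simp add: lo_def enc_def)

lemma enc_hi_lo: "x < p * p \<Longrightarrow> enc p (hi p x) (lo p x) = x"
  unfolding hi_def lo_def enc_def by (metis div_mult_mod_eq less_mult_imp_div_less mod_less)

lemma hi_lo_eqI: "x < p * p \<Longrightarrow> y < p * p \<Longrightarrow> hi p x = hi p y \<Longrightarrow> lo p x = lo p y \<Longrightarrow> x = y"
  by (metis enc_hi_lo)

lemma enc_inject: "a < p \<Longrightarrow> b < p \<Longrightarrow> a' < p \<Longrightarrow> b' < p \<Longrightarrow>
    enc p a b = enc p a' b' \<longleftrightarrow> a = a' \<and> b = b'"
  by (metis hi_enc lo_enc)

text \<open>\<open>x - y + z\<close> in \<open>\<int>\<^sub>p\<close>, avoiding the truncated subtraction of \<^typ>\<open>nat\<close>.\<close>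

definition zp_malcev :: "nat \<Rightarrow> nat \<Rightarrow> nat \<Rightarrow> nat \<Rightarrow> nat" where
  "zp_malcev p x y z = (x + (p - 1) * y + z) mod p"

lemma zp_malcev_less: "0 < p \<Longrightarrow> zp_malcev p x y z < p"
  by (simp add: zp_malcev_def)

lemma zp_malcev_mod: "zp_malcev p (x mod p) (y mod p) (z mod p) = zp_malcev p x y z"
proof -
  have "[x mod p + (p - 1) * (y mod p) + z mod p = x + (p - 1) * y + z] (mod p)"
    by (intro cong_add cong_scalar_left) (simp_all add: cong_def)
  then show ?thesis by (simp add: zp_malcev_def cong_def)
qed

lemma zp_malcev_right: "x < p \<Longrightarrow> zp_malcev p x y y = x"
proof -
  assume "x < p"
  moreover have "(p - 1) * y + y = p * y" using \<open>x < p\<close> by (cases p) auto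
  ultimately show ?thesis by (simp add: zp_malcev_def add.assoc)
qed

lemma zp_malcev_left: "x < p \<Longrightarrow> zp_malcev p y y x = x"
proof -
  assume "x < p"
  moreover have "y + (p - 1) * y = p * y" using \<open>x < p\<close> by (cases p) auto
  ultimately show ?thesis by (simp add: zp_malcev_def)
qed

lemma zp_malcev_select:
  assumes "x < p" "y < p"
  shows "(y + zp_malcev p x y 0 * (if b then 1 else 0)) mod p = (if b then x else y)"
proof (cases b)
  case True
  have "[y + zp_malcev p x y 0 = y + (x + (p - 1) * y)] (mod p)"
    by (simp add: zp_malcev_def cong_def mod_simps)
  also have "y + (x + (p - 1) * y) = x + p * y"
    using assms by (cases p) auto
  finally show ?thesis using True assms by (simp add: cong_def)
qed (use assms in simp)

text \<open>\<open>a - b = c - d\<close> in \<open>\<int>\<^sub>p\<close>. For the four values \<open>t(a, c), t(a, d), t(b, c), t(b, d)\<close> of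
  the term condition this relation is preserved by both operations, which yields centrality.\<close>

definition parallelogram :: "nat \<Rightarrow> nat \<Rightarrow> nat \<Rightarrow> nat \<Rightarrow> nat \<Rightarrow> bool" where
  "parallelogram p a b c d \<longleftrightarrow> [a + d = b + c] (mod p)"

lemma parallelogram_zp_malcev:
  assumes "parallelogram p a0 b0 c0 d0" "parallelogram p a1 b1 c1 d1" "parallelogram p a2 b2 c2 d2"
  shows "parallelogram p (zp_malcev p a0 a1 a2) (zp_malcev p b0 b1 b2) (zp_malcev p c0 c1 c2)
    (zp_malcev p d0 d1 d2)"
proof -
  have regroup: "(x0 + q * x1 + x2) + (y0 + q * y1 + y2)
      = (x0 + y0) + q * (x1 + y1) + (x2 + y2)" for q x0 x1 x2 y0 y1 y2 :: nat
    by (simp add: algebra_simps)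
  have "[(a0 + d0) + (p - 1) * (a1 + d1) + (a2 + d2) = (b0 + c0) + (p - 1) * (b1 + c1) + (b2 + c2)] (mod p)"
    using assms unfolding parallelogram_def by (metis cong_add cong_scalar_left)
  then show ?thesis
    unfolding parallelogram_def zp_malcev_def regroup[symmetric] cong_def by (simp add: mod_simps)
qed

lemma parallelogram_mult_add:
  assumes "parallelogram p a b c d" "parallelogram p a' b' c' d'"
  shows "parallelogram p ((a + k * a') mod p) ((b + k * b') mod p) ((c + k * c') mod p)
    ((d + k * d') mod p)"
proof -
  have regroup: "(x + k * x') + (y + k * y') = (x + y) + k * (x' + y')" for x x' y y' :: nat
    by (simp add: algebra_simps)
  have "[(a + d) + k * (a' + d') = (b + c) + k * (b' + c')] (mod p)"
    using assms unfolding parallelogram_def by (metis cong_add cong_scalar_left)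
  then show ?thesis
    unfolding parallelogram_def regroup[symmetric] cong_def by (simp add: mod_simps)
qed

lemma parallelogram_cancel: "parallelogram p a a c d \<Longrightarrow> c < p \<Longrightarrow> d < p \<Longrightarrow> c = d"
  unfolding parallelogram_def by (metis cong_add_lcancel_nat cong_less_modulus_unique_nat)

definition malcev_op :: "nat \<Rightarrow> nat list \<Rightarrow> nat" where
  "malcev_op p xs = enc p (zp_malcev p (hi p (xs ! 0)) (hi p (xs ! 1)) (hi p (xs ! 2)))
                          (zp_malcev p (lo p (xs ! 0)) (lo p (xs ! 1)) (lo p (xs ! 2)))"

definition mult_add_op :: "nat \<Rightarrow> nat list \<Rightarrow> nat" where
  "mult_add_op p xs = enc p (hi p (xs ! 2)) ((lo p (xs ! 2) + hi p (xs ! 0) * lo p (xs ! 1)) mod p)"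

definition Zp2 :: "nat \<Rightarrow> alg" where
  "Zp2 p = \<lparr>univ = {..<p * p}, ops = [(3, malcev_op p), (3, mult_add_op p)]\<rparr>"

lemma univ_Zp2 [simp]: "univ (Zp2 p) = {..<p * p}"
  and length_ops_Zp2 [simp]: "length (ops (Zp2 p)) = 2"
  and opfun_Zp2 [simp]: "opfun (Zp2 p) 0 = malcev_op p" "opfun (Zp2 p) (Suc 0) = mult_add_op p"
  by (simp_all add: Zp2_def opfun_def)

lemma arity_Zp2: "f < 2 \<Longrightarrow> arity (Zp2 p) f = 3"
  by (auto simp: Zp2_def arity_def less_2_cases_iff)

lemma hi_malcev_op:
    "0 < p \<Longrightarrow> hi p (malcev_op p xs) = zp_malcev p (hi p (xs ! 0)) (hi p (xs ! 1)) (hi p (xs ! 2))"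
  and lo_malcev_op:
    "0 < p \<Longrightarrow> lo p (malcev_op p xs) = zp_malcev p (lo p (xs ! 0)) (lo p (xs ! 1)) (lo p (xs ! 2))"
  and hi_mult_add_op: "0 < p \<Longrightarrow> hi p (mult_add_op p xs) = hi p (xs ! 2)"
  and lo_mult_add_op:
    "0 < p \<Longrightarrow> lo p (mult_add_op p xs) = (lo p (xs ! 2) + hi p (xs ! 0) * lo p (xs ! 1)) mod p"
  by (simp_all add: malcev_op_def mult_add_op_def zp_malcev_less hi_less lo_less)

lemma malcev_op_enc:
  assumes "a0 < p" "a1 < p" "a2 < p" "b0 < p" "b1 < p" "b2 < p"
  shows "malcev_op p [enc p a0 b0, enc p a1 b1, enc p a2 b2]
    = enc p (zp_malcev p a0 a1 a2) (zp_malcev p b0 b1 b2)"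
  using assms by (simp add: malcev_op_def)

lemma mult_add_op_enc:
  assumes "a0 < p" "a1 < p" "a2 < p" "b0 < p" "b1 < p" "b2 < p"
  shows "mult_add_op p [enc p a0 b0, enc p a1 b1, enc p a2 b2] = enc p a2 ((b2 + a0 * b1) mod p)"
  using assms by (simp add: mult_add_op_def)

lemma malcev_op_less: "0 < p \<Longrightarrow> malcev_op p xs < p * p"
  and mult_add_op_less: "0 < p \<Longrightarrow> mult_add_op p xs < p * p"
  by (simp_all add: malcev_op_def mult_add_op_def enc_less zp_malcev_less hi_less lo_less)

lemma opfun_Zp2_less: "0 < p \<Longrightarrow> f < 2 \<Longrightarrow> opfun (Zp2 p) f xs < p * p"
  by (auto simp: less_2_cases_iff malcev_op_less mult_add_op_less)

lemma finite_algebra_Zp2: "0 < p \<Longrightarrow> finite_algebra (Zp2 p)"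
  unfolding finite_algebra_def by (auto simp: opfun_Zp2_less lessThan_empty_iff)

lemma has_malcev_term_Zp2: "0 < p \<Longrightarrow> has_malcev_term (Zp2 p)"
  unfolding has_malcev_term_def malcev_term_def
  by (rule exI[of _ "TAp 0 [TV 0, TV 1, TV 2]"])
     (auto simp: arity_Zp2 malcev_op_def zp_malcev_left zp_malcev_right hi_less lo_less enc_hi_lo)

lemma wf_trm_Zp2_induct [consumes 1, case_names var malcev mult_add]:
  assumes "wf_trm (Zp2 p) t"
    and "\<And>i. P (TV i)"
    and "\<And>t0 t1 t2. wf_trm (Zp2 p) t0 \<Longrightarrow> wf_trm (Zp2 p) t1 \<Longrightarrow> wf_trm (Zp2 p) t2 \<Longrightarrow>
      P t0 \<Longrightarrow> P t1 \<Longrightarrow> P t2 \<Longrightarrow> P (TAp 0 [t0, t1, t2])"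
    and "\<And>t0 t1 t2. wf_trm (Zp2 p) t0 \<Longrightarrow> wf_trm (Zp2 p) t1 \<Longrightarrow> wf_trm (Zp2 p) t2 \<Longrightarrow>
      P t0 \<Longrightarrow> P t1 \<Longrightarrow> P t2 \<Longrightarrow> P (TAp 1 [t0, t1, t2])"
  shows "P t"
  using assms(1)
proof (induction t)
  case (TV i)
  show ?case by (rule assms(2))
next
  case (TAp f ts)
  then have f: "f = 0 \<or> f = 1" and "length ts = 3" by (auto simp: arity_Zp2)
  then obtain t0 t1 t2 where ts: "ts = [t0, t1, t2]"
    by (auto simp: numeral_3_eq_3 length_Suc_conv)
  have "wf_trm (Zp2 p) t0" "wf_trm (Zp2 p) t1" "wf_trm (Zp2 p) t2" using TAp.prems by (auto simp: ts)
  moreover have "P t0" "P t1" "P t2" using TAp by (auto simp: ts)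
  ultimately show ?case using f assms(3,4) by (auto simp: ts)
qed

lemma hi_teval_cong:
  assumes "0 < p" "wf_trm (Zp2 p) t" "\<And>i. hi p (e i) = hi p (e' i)"
  shows "hi p (teval (Zp2 p) e t) = hi p (teval (Zp2 p) e' t)"
  using assms(2) by (induction rule: wf_trm_Zp2_induct) (simp_all add: assms hi_malcev_op hi_mult_add_op)

lemma hi_teval_parallelogram:
  assumes "0 < p" "wf_trm (Zp2 p) t"
    and "\<And>i. parallelogram p (hi p (e1 i)) (hi p (e2 i)) (hi p (e3 i)) (hi p (e4 i))"
  shows "parallelogram p (hi p (teval (Zp2 p) e1 t)) (hi p (teval (Zp2 p) e2 t))
    (hi p (teval (Zp2 p) e3 t)) (hi p (teval (Zp2 p) e4 t))"
  using assms(2)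
  by (induction rule: wf_trm_Zp2_induct)
     (simp_all add: assms hi_malcev_op hi_mult_add_op parallelogram_zp_malcev)

lemma lo_teval_parallelogram:
  assumes p: "0 < p" and t: "wf_trm (Zp2 p) t"
    and hi_eq: "\<And>i. hi p (e2 i) = hi p (e1 i)" "\<And>i. hi p (e3 i) = hi p (e1 i)" "\<And>i. hi p (e4 i) = hi p (e1 i)"
    and "\<And>i. parallelogram p (lo p (e1 i)) (lo p (e2 i)) (lo p (e3 i)) (lo p (e4 i))"
  shows "parallelogram p (lo p (teval (Zp2 p) e1 t)) (lo p (teval (Zp2 p) e2 t))
    (lo p (teval (Zp2 p) e3 t)) (lo p (teval (Zp2 p) e4 t))"
  using t
proof (induction rule: wf_trm_Zp2_induct)
  case (mult_add t0 t1 t2)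
  have "hi p (teval (Zp2 p) e2 t0) = hi p (teval (Zp2 p) e1 t0)"
    "hi p (teval (Zp2 p) e3 t0) = hi p (teval (Zp2 p) e1 t0)"
    "hi p (teval (Zp2 p) e4 t0) = hi p (teval (Zp2 p) e1 t0)"
    using hi_teval_cong[OF p mult_add(1)] hi_eq by blast+
  then show ?case using mult_add(5,6) by (simp add: p lo_mult_add_op parallelogram_mult_add)
qed (simp_all add: assms lo_malcev_op parallelogram_zp_malcev)

section \<open>Solvability\<close>

lemma centralizes_mono:
  "centralizes A \<alpha> \<beta> \<delta> \<Longrightarrow> \<alpha>' \<subseteq> \<alpha> \<Longrightarrow> \<beta>' \<subseteq> \<beta> \<Longrightarrow> centralizes A \<alpha>' \<beta>' \<delta>"
  unfolding centralizes_def by blast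

lemma commutator_subset: "congruence A \<delta> \<Longrightarrow> centralizes A \<alpha> \<beta> \<delta> \<Longrightarrow> commutator A \<alpha> \<beta> \<subseteq> \<delta>"
  unfolding commutator_def by blast

lemma Id_on_subset_commutator: "Id_on (univ A) \<subseteq> commutator A \<alpha> \<beta>"
  unfolding commutator_def congruence_def equiv_def refl_on_def by blast

lemma congruence_Id_on:
  assumes "finite_algebra A"
  shows "congruence A (Id_on (univ A))"
  unfolding congruence_def
proof (intro conjI allI impI)
  show "equiv (univ A) (Id_on (univ A))"
    by (auto simp: equiv_def refl_on_def sym_def trans_def)
  fix f xs ys
  assume f: "f < length (ops A)" and xs_ys: "length xs = arity A f \<and> length ys = arity A f \<and>
    (\<forall>i < arity A f. (xs ! i, ys ! i) \<in> Id_on (univ A))"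
  then have "xs = ys"
    by (intro nth_equalityI) auto
  moreover have "set xs \<subseteq> univ A"
    using xs_ys by (auto simp: in_set_conv_nth)
  ultimately show "(opfun A f xs, opfun A f ys) \<in> Id_on (univ A)"
    using assms f xs_ys unfolding finite_algebra_def by auto
qed

lemma solvable_algI:
  assumes "Defs.derived A (Suc k) \<subseteq> Id_on (univ A)"
  shows "solvable_alg A"
proof -
  have "Defs.derived A (Suc k) = Id_on (univ A)"
    using assms Id_on_subset_commutator[of A] by (simp add: subset_antisym)
  then show ?thesis unfolding solvable_alg_def by blast
qed

lemma teval_in_univ:
  assumes "finite_algebra A" "wf_trm A t" "\<And>i. e i \<in> univ A"
  shows "teval A e t \<in> univ A"
  using assms(2)
proof (induction t)
  case (TV i)
  then show ?case by (simp add: assms(3))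
next
  case (TAp f ts)
  then have "set (map (teval A e) ts) \<subseteq> univ A" by auto
  then show ?case using TAp.prems assms(1) unfolding finite_algebra_def by simp
qed

definition hi_kernel :: "nat \<Rightarrow> (nat \<times> nat) set" where
  "hi_kernel p = {(x, y). x < p * p \<and> y < p * p \<and> hi p x = hi p y}"

lemma congruence_hi_kernel:
  assumes p: "0 < p"
  shows "congruence (Zp2 p) (hi_kernel p)"
  unfolding congruence_def
proof (intro conjI allI impI)
  show "equiv (univ (Zp2 p)) (hi_kernel p)"
    by (auto simp: equiv_def refl_on_def sym_def trans_def hi_kernel_def)
  fix f xs ys
  assume f: "f < length (ops (Zp2 p))" and xs_ys: "length xs = arity (Zp2 p) f \<and> length ys = arity (Zp2 p) f \<and>
    (\<forall>i < arity (Zp2 p) f. (xs ! i, ys ! i) \<in> hi_kernel p)"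
  then have "f = 0 \<or> f = 1" and "\<forall>i < 3. hi p (xs ! i) = hi p (ys ! i)"
    by (auto simp: arity_Zp2 hi_kernel_def)
  then show "(opfun (Zp2 p) f xs, opfun (Zp2 p) f ys) \<in> hi_kernel p"
    using p by (auto simp: hi_kernel_def malcev_op_less mult_add_op_less hi_malcev_op hi_mult_add_op)
qed

lemma centralizes_hi_kernel:
  assumes p: "0 < p"
  shows "centralizes (Zp2 p) (univ (Zp2 p) \<times> univ (Zp2 p)) (univ (Zp2 p) \<times> univ (Zp2 p)) (hi_kernel p)"
  unfolding centralizes_def
proof (intro allI impI, elim conjE)
  fix t m a b c d
  let ?v = "\<lambda>x y. teval (Zp2 p) (\<lambda>i. if i < m then x i else y i) t"
  assume t: "wf_trm (Zp2 p) t" and "\<forall>i. (a i, b i) \<in> univ (Zp2 p) \<times> univ (Zp2 p)"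
    and "\<forall>i. (c i, d i) \<in> univ (Zp2 p) \<times> univ (Zp2 p)" and "(?v a c, ?v a d) \<in> hi_kernel p"
  then have ac_ad: "hi p (?v a c) = hi p (?v a d)"
    and "\<forall>i. a i < p * p \<and> b i < p * p \<and> c i < p * p \<and> d i < p * p"
    by (auto simp: hi_kernel_def)
  then have "?v b c < p * p" "?v b d < p * p"
    using teval_in_univ[OF finite_algebra_Zp2[OF p] t] by simp_all
  moreover have "parallelogram p (hi p (?v a c)) (hi p (?v a d)) (hi p (?v b c)) (hi p (?v b d))"
    by (rule hi_teval_parallelogram[OF p t]) (simp add: parallelogram_def add.commute)
  then have "hi p (?v b c) = hi p (?v b d)"
    unfolding ac_ad by (rule parallelogram_cancel) (simp_all add: p hi_less)
  ultimately show "(?v b c, ?v b d) \<in> hi_kernel p"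
    by (simp add: hi_kernel_def)
qed

lemma hi_kernel_centralizes_itself:
  assumes p: "0 < p"
  shows "centralizes (Zp2 p) (hi_kernel p) (hi_kernel p) (Id_on (univ (Zp2 p)))"
  unfolding centralizes_def
proof (intro allI impI, elim conjE)
  fix t m a b c d
  let ?e = "\<lambda>x y (i :: nat). if i < m then x i else y i :: nat"
  let ?v = "\<lambda>x y. teval (Zp2 p) (?e x y) t"
  assume t: "wf_trm (Zp2 p) t" and "\<forall>i. (a i, b i) \<in> hi_kernel p"
    and "\<forall>i. (c i, d i) \<in> hi_kernel p" and "(?v a c, ?v a d) \<in> Id_on (univ (Zp2 p))"
  then have ac_ad: "?v a c = ?v a d" and "\<forall>i. hi p (b i) = hi p (a i) \<and> hi p (d i) = hi p (c i)"
    and bounds: "\<forall>i. a i < p * p \<and> b i < p * p \<and> c i < p * p \<and> d i < p * p"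
    by (auto simp: hi_kernel_def)
  then have hi_env: "hi p (?e a d i) = hi p (?e a c i)" "hi p (?e b c i) = hi p (?e a c i)"
    "hi p (?e b d i) = hi p (?e a c i)" for i
    by auto
  have "parallelogram p (lo p (?v a c)) (lo p (?v a d)) (lo p (?v b c)) (lo p (?v b d))"
    by (rule lo_teval_parallelogram[OF p t hi_env]) (simp add: parallelogram_def add.commute)
  then have "lo p (?v b c) = lo p (?v b d)"
    unfolding ac_ad by (rule parallelogram_cancel) (simp_all add: p lo_less)
  moreover have "hi p (?v b c) = hi p (?v b d)"
    using hi_teval_cong[OF p t, of "?e b c" "?e b d"] hi_env by simp
  moreover have "?v b c < p * p" "?v b d < p * p"
    using teval_in_univ[OF finite_algebra_Zp2[OF p] t] bounds by simp_all
  ultimately show "(?v b c, ?v b d) \<in> Id_on (univ (Zp2 p))"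
    using hi_lo_eqI[of "?v b c" p "?v b d"] by (auto intro!: Id_onI)
qed

lemma solvable_Zp2:
  assumes p: "0 < p"
  shows "solvable_alg (Zp2 p)"
proof (rule solvable_algI)
  have "Defs.derived (Zp2 p) 1 \<subseteq> hi_kernel p"
    using commutator_subset[OF congruence_hi_kernel centralizes_hi_kernel] p by simp
  then have "centralizes (Zp2 p) (Defs.derived (Zp2 p) 1) (Defs.derived (Zp2 p) 1) (Id_on (univ (Zp2 p)))"
    using centralizes_mono[OF hi_kernel_centralizes_itself[OF p]] by blast
  then show "Defs.derived (Zp2 p) (Suc 1) \<subseteq> Id_on (univ (Zp2 p))"
    using commutator_subset[OF congruence_Id_on[OF finite_algebra_Zp2[OF p]]] by simp
qed

section \<open>Linear programs\<close>

text \<open>A linear program \<open>P\<close> computes values \<open>v\<^sub>0, ..., v\<^bsub>length P\<^esub>\<close>: \<open>v\<^sub>0\<close> is a start value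
  and \<open>v\<^bsub>k+1\<^esub>\<close> is the sum of \<open>l * v\<^sub>j\<close> over the entries \<open>(l, j)\<close> of row \<open>k\<close>, where \<open>j \<le> k\<close>.
  It is an ABP read backwards from the sink, in a form that composes easily.\<close>

type_synonym lin_prog = "(alab \<times> nat) list list"

definition lin_comb :: "bool list \<Rightarrow> nat list \<Rightarrow> (alab \<times> nat) list \<Rightarrow> nat" where
  "lin_comb b vs ts = sum_list (map (\<lambda>(l, j). alab_val b l * vs ! j) ts)"

definition lp_vals :: "nat \<Rightarrow> bool list \<Rightarrow> lin_prog \<Rightarrow> nat list" where
  "lp_vals v0 b P = foldl (\<lambda>vs ts. vs @ [lin_comb b vs ts]) [v0] P"

definition lp_value :: "bool list \<Rightarrow> lin_prog \<Rightarrow> nat" where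
  "lp_value b P = lp_vals 1 b P ! length P"

definition wf_alab :: "nat \<Rightarrow> nat \<Rightarrow> alab \<Rightarrow> bool" where
  "wf_alab p n l \<longleftrightarrow> (case l of LVar i \<Rightarrow> i < n | LConst a \<Rightarrow> a < p)"

definition wf_lp :: "nat \<Rightarrow> nat \<Rightarrow> lin_prog \<Rightarrow> bool" where
  "wf_lp p n P \<longleftrightarrow> (\<forall>k < length P. \<forall>(l, j) \<in> set (P ! k). j \<le> k \<and> wf_alab p n l)"

definition lp_size :: "lin_prog \<Rightarrow> nat" where
  "lp_size P = length P + sum_list (map length P)"

lemma lp_vals_Nil [simp]: "lp_vals v0 b [] = [v0]"
  by (simp add: lp_vals_def)

lemma lp_vals_snoc [simp]: "lp_vals v0 b (P @ [ts]) = lp_vals v0 b P @ [lin_comb b (lp_vals v0 b P) ts]"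
  by (simp add: lp_vals_def)

lemma length_lp_vals [simp]: "length (lp_vals v0 b P) = Suc (length P)"
  by (induction P rule: rev_induct) auto

lemma lp_vals_ne_Nil [simp]: "lp_vals v0 b P \<noteq> []"
  using length_lp_vals[of v0 b P] by (metis list.size(3) nat.distinct(1))

lemma lp_vals_append_nth: "i \<le> length P \<Longrightarrow> lp_vals v0 b (P @ Q) ! i = lp_vals v0 b P ! i"
proof (induction Q rule: rev_induct)
  case (snoc ts Q)
  then show ?case by (simp add: nth_append flip: append_assoc)
qed simp

lemma lp_vals_nth_0 [simp]: "lp_vals v0 b P ! 0 = v0"
  using lp_vals_append_nth[of 0 "[]" v0 b P] by simp

lemma lp_vals_snoc_nth_last: "lp_vals v0 b (P @ [ts]) ! Suc (length P) = lin_comb b (lp_vals v0 b P) ts"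
  by (simp add: nth_append)

lemma lp_value_snoc: "lp_value b (P @ [ts]) = lin_comb b (lp_vals 1 b P) ts"
  by (simp add: lp_value_def nth_append)

lemma lin_comb_Nil [simp]: "lin_comb b vs [] = 0"
  by (simp add: lin_comb_def)

lemma lin_comb_append: "lin_comb b vs (ts @ us) = lin_comb b vs ts + lin_comb b vs us"
  by (simp add: lin_comb_def)

lemma lin_comb_cong:
  assumes "\<And>l j. (l, j) \<in> set ts \<Longrightarrow> vs ! j = vs' ! j"
  shows "lin_comb b vs ts = lin_comb b vs' ts"
  unfolding lin_comb_def using assms by (auto intro!: arg_cong[where f = sum_list])

lemma lin_comb_scale:
  assumes "\<And>l j. (l, j) \<in> set ts \<Longrightarrow> vs ! j = c * vs' ! j"
  shows "lin_comb b vs ts = c * lin_comb b vs' ts"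
proof -
  have "lin_comb b vs ts = sum_list (map (\<lambda>(l, j). c * (alab_val b l * vs' ! j)) ts)"
    unfolding lin_comb_def using assms by (auto intro!: arg_cong[where f = sum_list])
  also have "\<dots> = c * lin_comb b vs' ts"
    unfolding lin_comb_def by (induction ts) (auto simp: algebra_simps)
  finally show ?thesis .
qed

lemma wf_lpD: "wf_lp p n P \<Longrightarrow> k < length P \<Longrightarrow> (l, j) \<in> set (P ! k) \<Longrightarrow> j \<le> k \<and> wf_alab p n l"
  unfolding wf_lp_def by fastforce

lemma wf_lp_Nil [simp]: "wf_lp p n []"
  by (simp add: wf_lp_def)

lemma wf_lp_snoc: "wf_lp p n (P @ [ts]) \<longleftrightarrow> wf_lp p n P \<and> (\<forall>(l, j) \<in> set ts. j \<le> length P \<and> wf_alab p n l)"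
  unfolding wf_lp_def by (auto simp: nth_append less_Suc_eq)

lemma lp_size_Nil [simp]: "lp_size [] = 0"
  and lp_size_append [simp]: "lp_size (P @ Q) = lp_size P + lp_size Q"
  and lp_size_Cons [simp]: "lp_size (ts # P) = Suc (length ts) + lp_size P"
  by (simp_all add: lp_size_def)

lemma lp_vals_nth_Suc:
  assumes wf: "wf_lp p n P" and k: "k < length P"
  shows "lp_vals v0 b P ! Suc k = lin_comb b (lp_vals v0 b P) (P ! k)"
proof -
  have P: "P = (take k P @ [P ! k]) @ drop (Suc k) P"
    using k by (simp add: Cons_nth_drop_Suc)
  have "lp_vals v0 b P ! Suc k = lin_comb b (lp_vals v0 b (take k P)) (P ! k)"
    using lp_vals_append_nth[of "Suc k" "take k P @ [P ! k]" v0 b "drop (Suc k) P"] P k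
    by (simp add: nth_append)
  also have "\<dots> = lin_comb b (lp_vals v0 b P) (P ! k)"
  proof (rule lin_comb_cong)
    fix l j assume "(l, j) \<in> set (P ! k)"
    then have "j \<le> k" using wf_lpD[OF wf k] by blast
    then show "lp_vals v0 b (take k P) ! j = lp_vals v0 b P ! j"
      using lp_vals_append_nth[of j "take k P" v0 b "drop k P"] k by simp
  qed
  finally show ?thesis .
qed

lemma lp_vals_scale:
  assumes "wf_lp p n P" "i \<le> length P"
  shows "lp_vals v0 b P ! i = v0 * lp_vals 1 b P ! i"
  using assms
proof (induction P arbitrary: i rule: rev_induct)
  case (snoc ts P)
  have wf: "wf_lp p n P" and ts: "\<forall>(l, j) \<in> set ts. j \<le> length P"
    using snoc.prems by (auto simp: wf_lp_snoc)
  show ?case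
  proof (cases "i \<le> length P")
    case True
    then show ?thesis using snoc.IH[OF wf] by (simp add: nth_append)
  next
    case False
    then have "i = Suc (length P)" using snoc.prems by simp
    moreover have "lin_comb b (lp_vals v0 b P) ts = v0 * lin_comb b (lp_vals 1 b P) ts"
      by (rule lin_comb_scale) (use ts snoc.IH[OF wf] in auto)
    ultimately show ?thesis by (simp add: nth_append)
  qed
qed simp

definition lp_shift :: "nat \<Rightarrow> lin_prog \<Rightarrow> lin_prog" where
  "lp_shift d P = map (map (\<lambda>(l, j). (l, j + d))) P"

lemma lp_shift_Nil [simp]: "lp_shift d [] = []"
  and lp_shift_snoc [simp]: "lp_shift d (P @ [ts]) = lp_shift d P @ [map (\<lambda>(l, j). (l, j + d)) ts]"
  and length_lp_shift [simp]: "length (lp_shift d P) = length P"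
  and lp_size_lp_shift [simp]: "lp_size (lp_shift d P) = lp_size P"
  by (simp_all add: lp_shift_def lp_size_def comp_def)

lemma lin_comb_shift:
  "length vs = d \<Longrightarrow> lin_comb b (vs @ ws) (map (\<lambda>(l, j). (l, j + d)) ts) = lin_comb b ws ts"
  unfolding lin_comb_def by (induction ts) (auto simp: nth_append)

lemma lp_vals_append_shift:
  "lp_vals 1 b (R @ lp_shift (length R) P) = butlast (lp_vals 1 b R) @ lp_vals (lp_value b R) b P"
proof (induction P rule: rev_induct)
  case Nil
  then show ?case
    using append_butlast_last_id[of "lp_vals 1 b R"] by (simp add: lp_value_def last_conv_nth)
next
  case (snoc ts P)
  have "length (butlast (lp_vals 1 b R)) = length R" by simp
  then show ?case
    using snoc.IH by (simp flip: append_assoc add: lin_comb_shift)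
qed

lemma wf_lp_append_shift:
  assumes "wf_lp p n R" "wf_lp p n P"
  shows "wf_lp p n (R @ lp_shift (length R) P)"
  using assms(2)
proof (induction P rule: rev_induct)
  case (snoc ts P)
  then show ?case by (auto simp: wf_lp_snoc simp flip: append_assoc)
qed (simp add: assms(1))

text \<open>\<open>P\<close> runs from the output of \<open>Q\<close>, and all its values are linear in the start value.\<close>

definition lp_mult :: "lin_prog \<Rightarrow> lin_prog \<Rightarrow> lin_prog" where
  "lp_mult P Q = Q @ lp_shift (length Q) P"

lemma lp_value_mult:
  assumes "wf_lp p n P"
  shows "lp_value b (lp_mult P Q) = lp_value b Q * lp_value b P"
proof -
  have "lp_value b (lp_mult P Q) = lp_vals 1 b (Q @ lp_shift (length Q) P) ! (length Q + length P)"
    by (simp add: lp_mult_def lp_value_def)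
  also have "\<dots> = lp_vals (lp_value b Q) b P ! length P"
    unfolding lp_vals_append_shift by (simp add: nth_append)
  also have "\<dots> = lp_value b Q * lp_value b P"
    using lp_vals_scale[OF assms order_refl, of "lp_value b Q" b] by (simp add: lp_value_def[of b P])
  finally show ?thesis .
qed

lemma wf_lp_mult: "wf_lp p n P \<Longrightarrow> wf_lp p n Q \<Longrightarrow> wf_lp p n (lp_mult P Q)"
  unfolding lp_mult_def by (rule wf_lp_append_shift)

lemma lp_size_mult: "lp_size (lp_mult P Q) = lp_size P + lp_size Q"
  by (simp add: lp_mult_def)

text \<open>To add, the value is reset to 1 after \<open>P\<close>, then \<open>Q\<close> runs, and a final row sums both results.\<close>

definition lp_add :: "lin_prog \<Rightarrow> lin_prog \<Rightarrow> lin_prog" where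
  "lp_add P Q = (let R = P @ [[(LConst 1, 0)]] in
     R @ lp_shift (length R) Q @ [[(LConst 1, length P), (LConst 1, length R + length Q)]])"

lemma lp_value_add: "lp_value b (lp_add P Q) = lp_value b P + lp_value b Q"
proof -
  let ?R = "P @ [[(LConst 1, 0)]]"
  have "lp_value b ?R = 1" by (simp add: lp_value_snoc lin_comb_def)
  then have "lp_vals 1 b (?R @ lp_shift (length ?R) Q) = lp_vals 1 b P @ lp_vals 1 b Q"
    by (simp only: lp_vals_append_shift) simp
  then show ?thesis
    by (simp add: lp_add_def Let_def lp_value_snoc lin_comb_def nth_append lp_value_def
        flip: append_assoc)
qed

lemma wf_lp_add:
  assumes "1 < p" "wf_lp p n P" "wf_lp p n Q"
  shows "wf_lp p n (lp_add P Q)"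
proof -
  let ?R = "P @ [[(LConst 1, 0)]]"
  have "wf_lp p n ?R" using assms by (simp add: wf_lp_snoc wf_alab_def)
  then have "wf_lp p n (?R @ lp_shift (length ?R) Q)" using assms(3) by (rule wf_lp_append_shift)
  then show ?thesis
    using assms(1) by (simp add: lp_add_def Let_def wf_lp_snoc wf_alab_def flip: append_assoc)
qed

lemma lp_size_add: "lp_size (lp_add P Q) = lp_size P + lp_size Q + 5"
  by (simp add: lp_add_def Let_def)

definition lp_computable :: "nat \<Rightarrow> nat \<Rightarrow> nat \<Rightarrow> (bool list \<Rightarrow> nat) \<Rightarrow> bool" where
  "lp_computable p n s f \<longleftrightarrow>
     (\<exists>P. wf_lp p n P \<and> lp_size P \<le> s \<and> (\<forall>w. length w = n \<longrightarrow> lp_value w P mod p = f w mod p))"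

lemma lp_computable_const: "0 < p \<Longrightarrow> lp_computable p n 2 (\<lambda>_. c)"
  unfolding lp_computable_def
  by (rule exI[of _ "[[(LConst (c mod p), 0)]]"])
     (simp add: wf_lp_def wf_alab_def lp_value_snoc[of _ "[]", simplified] lin_comb_def)

lemma lp_computable_var: "j < n \<Longrightarrow> lp_computable p n 2 (\<lambda>w. if w ! j then 1 else 0)"
  unfolding lp_computable_def
  by (rule exI[of _ "[[(LVar j, 0)]]"])
     (simp add: wf_lp_def wf_alab_def lp_value_snoc[of _ "[]", simplified] lin_comb_def)

lemma lp_computable_mono: "lp_computable p n s f \<Longrightarrow> s \<le> s' \<Longrightarrow> lp_computable p n s' f"
  unfolding lp_computable_def by (meson order_trans)

lemma lp_computable_cong:
  "lp_computable p n s f \<Longrightarrow> (\<And>w. length w = n \<Longrightarrow> f w mod p = g w mod p) \<Longrightarrow> lp_computable p n s g"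
  unfolding lp_computable_def by auto

lemma lp_computable_add:
  assumes p: "1 < p" and "lp_computable p n s1 f" "lp_computable p n s2 g"
  shows "lp_computable p n (s1 + s2 + 5) (\<lambda>w. f w + g w)"
proof -
  obtain P Q where P: "wf_lp p n P" "lp_size P \<le> s1" "\<forall>w. length w = n \<longrightarrow> lp_value w P mod p = f w mod p"
    and Q: "wf_lp p n Q" "lp_size Q \<le> s2" "\<forall>w. length w = n \<longrightarrow> lp_value w Q mod p = g w mod p"
    using assms(2,3) unfolding lp_computable_def by blast
  show ?thesis
    unfolding lp_computable_def
  proof (intro exI conjI allI impI)
    show "wf_lp p n (lp_add P Q)" using wf_lp_add[OF p P(1) Q(1)] .
    show "lp_size (lp_add P Q) \<le> s1 + s2 + 5" using P(2) Q(2) by (simp add: lp_size_add)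
    fix w :: "bool list" assume "length w = n"
    then show "lp_value w (lp_add P Q) mod p = (f w + g w) mod p"
      using P(3) Q(3) unfolding lp_value_add by (metis mod_add_eq)
  qed
qed

lemma lp_computable_mult:
  assumes "lp_computable p n s1 f" "lp_computable p n s2 g"
  shows "lp_computable p n (s1 + s2) (\<lambda>w. f w * g w)"
proof -
  obtain P Q where P: "wf_lp p n P" "lp_size P \<le> s1" "\<forall>w. length w = n \<longrightarrow> lp_value w P mod p = f w mod p"
    and Q: "wf_lp p n Q" "lp_size Q \<le> s2" "\<forall>w. length w = n \<longrightarrow> lp_value w Q mod p = g w mod p"
    using assms unfolding lp_computable_def by blast
  show ?thesis
    unfolding lp_computable_def
  proof (intro exI conjI allI impI)
    show "wf_lp p n (lp_mult P Q)" using wf_lp_mult[OF P(1) Q(1)] .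
    show "lp_size (lp_mult P Q) \<le> s1 + s2" using P(2) Q(2) by (simp add: lp_size_mult)
    fix w :: "bool list" assume "length w = n"
    then show "lp_value w (lp_mult P Q) mod p = (f w * g w) mod p"
      using P(3) Q(3) unfolding lp_value_mult[OF P(1)] by (metis mod_mult_eq mult.commute)
  qed
qed

lemma lp_computable_power:
  assumes p: "1 < p" and f: "lp_computable p n s f"
  shows "lp_computable p n (k * s + 2) (\<lambda>w. f w ^ k)"
proof (induction k)
  case 0
  then show ?case using lp_computable_const[of p n 1] p by (simp add: numeral_2_eq_2)
next
  case (Suc k)
  have "lp_computable p n (s + (k * s + 2)) (\<lambda>w. f w * f w ^ k)"
    by (rule lp_computable_mult[OF f Suc])
  then show ?case by (simp add: algebra_simps)
qed

lemma lp_computable_sum: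
  assumes p: "1 < p" and "finite I" and "\<And>i. i \<in> I \<Longrightarrow> lp_computable p n s (g i)"
  shows "lp_computable p n (card I * (s + 5) + 2) (\<lambda>w. \<Sum>i\<in>I. g i w)"
  using assms(2,3)
proof (induction I rule: finite_induct)
  case empty
  then show ?case using lp_computable_const[of p n 0] p by (simp add: numeral_2_eq_2)
next
  case (insert i I)
  have "lp_computable p n (s + (card I * (s + 5) + 2) + 5) (\<lambda>w. g i w + (\<Sum>i\<in>I. g i w))"
    using insert by (intro lp_computable_add[OF p]) auto
  then show ?case using insert by (simp add: algebra_simps)
qed

text \<open>In \<open>\<int>\<^sub>p\<close> the term below is \<open>1 - (x - t)\<^sup>p\<^sup>-\<^sup>1\<close>, written without subtraction;
  by Fermat's little theorem it is the indicator of \<open>x = t\<close>.\<close>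

lemma fermat_indicator:
  assumes p: "prime p" and t: "t < p"
  shows "(1 + (p - 1) * (x + (p - t)) ^ (p - 1)) mod p = (if x mod p = t then 1 else 0)"
proof -
  have p1: "1 < p" using p prime_gt_1_nat by blast
  have "[x = t] (mod p) \<longleftrightarrow> [x + (p - t) = t + (p - t)] (mod p)"
    by (rule cong_add_rcancel_nat[symmetric])
  then have root: "x mod p = t \<longleftrightarrow> p dvd x + (p - t)"
    using t by (simp only: cong_def) (simp add: dvd_eq_mod_eq_0)
  show ?thesis
  proof (cases "x mod p = t")
    case True
    then have "p dvd (x + (p - t)) ^ (p - 1)"
      using root p1 by (meson dvd_power dvd_trans zero_less_diff)
    then have "[1 + (p - 1) * (x + (p - t)) ^ (p - 1) = 1 + 0] (mod p)"
      by (intro cong_add) (simp_all add: cong_0_iff)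
    then show ?thesis using True p1 by (simp add: cong_def)
  next
    case False
    then have "[(x + (p - t)) ^ (p - 1) = 1] (mod p)"
      using root by (intro fermat_theorem[OF p]) simp
    then have "[1 + (p - 1) * (x + (p - t)) ^ (p - 1) = 1 + (p - 1) * 1] (mod p)"
      by (intro cong_add cong_scalar_left) auto
    then show ?thesis using False p1 by (simp add: cong_def)
  qed
qed

lemma lp_computable_eq_indicator:
  assumes p: "prime p" and f: "lp_computable p n s f" and t: "t < p"
  shows "lp_computable p n (p * (s + 7) + 11) (\<lambda>w. if f w mod p = t then 1 else 0)"
proof -
  have p1: "1 < p" using p prime_gt_1_nat by blast
  have "lp_computable p n (2 + (2 + ((p - 1) * (s + 2 + 5) + 2)) + 5)
      (\<lambda>w. 1 + (p - 1) * (f w + (p - t)) ^ (p - 1))"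
    using p1 by (intro lp_computable_add lp_computable_mult lp_computable_power f lp_computable_const) auto
  moreover have "2 + (2 + ((p - 1) * (s + 2 + 5) + 2)) + 5 \<le> p * (s + 7) + 11"
    by (simp add: algebra_simps diff_mult_distrib)
  ultimately show ?thesis
    by (rule lp_computable_cong[OF lp_computable_mono]) (use fermat_indicator[OF p t] p1 in simp)
qed

lemma lp_computable_indicator:
  assumes p: "prime p" and f: "lp_computable p n s f" and T: "T \<subseteq> {..<p}"
  shows "lp_computable p n (p * (p * (s + 7) + 16) + 2) (\<lambda>w. if f w mod p \<in> T then 1 else 0)"
proof -
  have p1: "1 < p" using p prime_gt_1_nat by blast
  have fin: "finite T" using T finite_subset by blast
  have "lp_computable p n (card T * (p * (s + 7) + 11 + 5) + 2) (\<lambda>w. \<Sum>t\<in>T. if f w mod p = t then 1 else 0)"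
    using T by (intro lp_computable_sum[OF p1 fin] lp_computable_eq_indicator[OF p f]) auto
  moreover have "card T * (p * (s + 7) + 11 + 5) + 2 \<le> p * (p * (s + 7) + 16) + 2"
    using mult_le_mono1[OF card_mono[OF _ T], of "p * (s + 7) + 16"] by (simp add: algebra_simps)
  ultimately show ?thesis
    by (rule lp_computable_cong[OF lp_computable_mono]) (simp add: fin sum.delta)
qed

lemma lp_computable_pair_indicator:
  assumes p: "prime p" and f: "lp_computable p n s f" and g: "lp_computable p n s g"
  shows "lp_computable p n (p * (2 * (p * (p * (s + 7) + 16) + 2) + 5) + 2)
    (\<lambda>w. if (f w mod p, g w mod p) \<in> R then 1 else 0)"
proof -
  have p1: "1 < p" using p prime_gt_1_nat by blast
  let ?s = "p * (p * (s + 7) + 16) + 2"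
  let ?ind = "\<lambda>w a. (if f w mod p \<in> {a} then 1 else 0 :: nat) *
    (if g w mod p \<in> {b. b < p \<and> (a, b) \<in> R} then 1 else 0)"
  have "lp_computable p n (?s + ?s) (\<lambda>w. ?ind w a)" if "a < p" for a
    using that by (intro lp_computable_mult lp_computable_indicator[OF p] f g) auto
  then have "lp_computable p n (card {..<p} * (?s + ?s + 5) + 2) (\<lambda>w. \<Sum>a<p. ?ind w a)"
    by (intro lp_computable_sum[OF p1]) auto
  then have sum: "lp_computable p n (p * (2 * ?s + 5) + 2) (\<lambda>w. \<Sum>a<p. ?ind w a)"
    by (rule lp_computable_mono) (simp add: algebra_simps)
  show ?thesis
  proof (rule lp_computable_cong[OF sum])
    fix w :: "bool list"
    have "(\<Sum>a<p. ?ind w a) = (\<Sum>a<p. if a = f w mod p then (if (a, g w mod p) \<in> R then 1 else 0) else 0)"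
      using p1 by (intro sum.cong) auto
    also have "\<dots> = (if (f w mod p, g w mod p) \<in> R then 1 else 0)"
      using p1 by (simp add: sum.delta)
    finally show "(\<Sum>a<p. ?ind w a) mod p = (if (f w mod p, g w mod p) \<in> R then 1 else 0) mod p"
      by (rule arg_cong)
  qed
qed

section \<open>Algebraic branching programs as linear programs\<close>

definition edge_weight :: "abp \<Rightarrow> bool list \<Rightarrow> nat \<Rightarrow> nat" where
  "edge_weight G b e = alab_val b (snd (snd (edges G ! e)))"

definition walk_weight :: "abp \<Rightarrow> bool list \<Rightarrow> nat list \<Rightarrow> nat" where
  "walk_weight G b es = prod_list (map (edge_weight G b) es)"

definition walk_sum :: "abp \<Rightarrow> bool list \<Rightarrow> nat \<Rightarrow> nat" where
  "walk_sum G b u = (\<Sum>es \<in> {es. abp_walk G u es}. walk_weight G b es)"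

lemma abp_value_walk_sum: "abp_value p G b = walk_sum G b 0 mod p"
  unfolding abp_value_def walk_sum_def abp_paths_def walk_weight_def edge_weight_def[abs_def] by simp

lemma wf_abp_edge:
  "wf_abp p n G \<Longrightarrow> e \<in> set (edges G) \<Longrightarrow> fst e < fst (snd e) \<and> fst (snd e) < nv G \<and> wf_alab p n (snd (snd e))"
  unfolding wf_abp_def wf_alab_def by (auto simp: case_prod_beta)

lemma abp_walk_length: "wf_abp p n G \<Longrightarrow> abp_walk G u es \<Longrightarrow> u + length es \<le> nv G - 1"
proof (induction es arbitrary: u)
  case (Cons e es)
  then have "e < length (edges G)" "fst (edges G ! e) = u" "abp_walk G (fst (snd (edges G ! e))) es"
    by simp_all
  moreover have "fst (edges G ! e) < fst (snd (edges G ! e))"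
    using wf_abp_edge[OF Cons.prems(1) nth_mem[OF \<open>e < length (edges G)\<close>]] by simp
  ultimately show ?case using Cons.IH[OF Cons.prems(1)] by force
qed simp

lemma abp_walk_set: "abp_walk G u es \<Longrightarrow> set es \<subseteq> {..<length (edges G)}"
  by (induction es arbitrary: u) auto

lemma finite_abp_walks:
  assumes "wf_abp p n G"
  shows "finite {es. abp_walk G u es}"
proof (rule finite_subset)
  show "{es. abp_walk G u es} \<subseteq> {es. set es \<subseteq> {..<length (edges G)} \<and> length es \<le> nv G}"
    using abp_walk_length[OF assms] abp_walk_set by fastforce
  show "finite {es. set es \<subseteq> {..<length (edges G)} \<and> length es \<le> nv G}"
    by (rule finite_lists_length_le) simp
qed

lemma abp_walks_split:
  "{es. abp_walk G u es} = (if u = nv G - 1 then {[]} else {}) \<union>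
     (\<lambda>(i, es). i # es) ` (SIGMA i : {i. i < length (edges G) \<and> fst (edges G ! i) = u}.
        {es. abp_walk G (fst (snd (edges G ! i))) es})"
  (is "?W = ?A \<union> ?C")
proof
  show "?W \<subseteq> ?A \<union> ?C"
  proof
    fix es assume "es \<in> ?W"
    then show "es \<in> ?A \<union> ?C" by (cases es) (auto intro!: rev_image_eqI)
  qed
  show "?A \<union> ?C \<subseteq> ?W" by (auto split: if_splits)
qed

lemma walk_sum_rec:
  assumes wf: "wf_abp p n G"
  shows "walk_sum G b u = (if u = nv G - 1 then 1 else 0) +
    (\<Sum>i | i < length (edges G) \<and> fst (edges G ! i) = u.
       edge_weight G b i * walk_sum G b (fst (snd (edges G ! i))))"
proof -
  let ?I = "{i. i < length (edges G) \<and> fst (edges G ! i) = u}"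
  let ?W = "\<lambda>i. {es. abp_walk G (fst (snd (edges G ! i))) es}"
  let ?A = "(if u = nv G - 1 then {[]} else {}) :: nat list set"
  have fin: "finite (Sigma ?I ?W)" using finite_abp_walks[OF wf] by (intro finite_SigmaI) auto
  have "walk_sum G b u = sum (walk_weight G b) ?A + sum (walk_weight G b) ((\<lambda>(i, es). i # es) ` Sigma ?I ?W)"
    unfolding walk_sum_def abp_walks_split[of G u] using fin by (intro sum.union_disjoint) auto
  also have "sum (walk_weight G b) ((\<lambda>(i, es). i # es) ` Sigma ?I ?W)
      = (\<Sum>(i, es) \<in> Sigma ?I ?W. edge_weight G b i * walk_weight G b es)"
    by (subst sum.reindex) (auto simp: inj_on_def walk_weight_def intro!: sum.cong)
  also have "\<dots> = (\<Sum>i \<in> ?I. edge_weight G b i * walk_sum G b (fst (snd (edges G ! i))))"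
    using finite_abp_walks[OF wf]
    by (subst sum.Sigma[symmetric]) (auto simp: walk_sum_def sum_distrib_left)
  finally show ?thesis by (simp add: walk_weight_def)
qed

lemma walk_sum_rec_list:
  assumes wf: "wf_abp p n G"
  shows "walk_sum G b u = (if u = nv G - 1 then 1 else 0) +
    sum_list (map (\<lambda>(x, v, l). if x = u then alab_val b l * walk_sum G b v else 0) (edges G))"
proof -
  let ?g = "\<lambda>(x, v, l). if x = u then alab_val b l * walk_sum G b v else 0"
  have "sum_list (map ?g (edges G)) = (\<Sum>i < length (edges G). ?g (edges G ! i))"
    by (simp add: sum_list_sum_nth atLeast0LessThan)
  also have "\<dots> = (\<Sum>i | i < length (edges G) \<and> fst (edges G ! i) = u.
      edge_weight G b i * walk_sum G b (fst (snd (edges G ! i))))"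
    by (simp add: sum.If_cases Int_def edge_weight_def case_prod_beta conj_commute)
  finally show ?thesis using walk_sum_rec[OF wf, of b u] by simp
qed

lemma sum_list_map_concat: "sum_list (map f (concat xss)) = sum_list (map (\<lambda>xs. sum_list (map f xs)) xss)"
  by (induction xss) auto

text \<open>Node \<open>k\<close> of the program becomes vertex \<open>length P - k\<close>: the output node is the source and the
  start node the sink.\<close>

definition abp_of_lp :: "lin_prog \<Rightarrow> abp" where
  "abp_of_lp P = \<lparr>nv = Suc (length P),
     edges = concat (map (\<lambda>k. map (\<lambda>(l, j). (length P - Suc k, length P - j, l)) (P ! k)) [0..<length P])\<rparr>"

lemma nv_abp_of_lp [simp]: "nv (abp_of_lp P) = Suc (length P)"
  by (simp add: abp_of_lp_def)

lemma wf_abp_of_lp: "wf_lp p n P \<Longrightarrow> wf_abp p n (abp_of_lp P)"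
  unfolding wf_abp_def wf_lp_def wf_alab_def abp_of_lp_def
  by (fastforce simp: diff_less_mono2 split: alab.splits)

lemma abp_size_abp_of_lp: "abp_size (abp_of_lp P) = Suc (lp_size P)"
proof -
  have "map (\<lambda>k. length (P ! k)) [0..<length P] = map length P"
    by (rule nth_equalityI) auto
  then show ?thesis
    by (simp add: abp_size_def abp_of_lp_def lp_size_def length_concat comp_def)
qed

lemma out_sum_abp_of_lp:
  assumes "i \<le> length P"
  shows "sum_list (map (\<lambda>(u, v, l). if u = length P - i then alab_val b l * F v else 0) (edges (abp_of_lp P)))
    = (if i = 0 then 0 else sum_list (map (\<lambda>(l, j). alab_val b l * F (length P - j)) (P ! (i - 1))))"
proof -
  have "length P - Suc k = length P - i \<longleftrightarrow> Suc k = i" if "k < length P" for k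
    using that assms by auto
  then have "sum_list (map (\<lambda>(u, v, l). if u = length P - i then alab_val b l * F v else 0)
        (edges (abp_of_lp P)))
      = (\<Sum>k < length P.
           sum_list (map (\<lambda>(l, j). if Suc k = i then alab_val b l * F (length P - j) else 0) (P ! k)))"
    by (simp add: abp_of_lp_def sum_list_map_concat interv_sum_list_conv_sum_set_nat atLeast0LessThan
        comp_def case_prod_unfold cong: if_cong)
  also have "\<dots> = (\<Sum>k < length P.
      if Suc k = i then sum_list (map (\<lambda>(l, j). alab_val b l * F (length P - j)) (P ! k)) else 0)"
    by (intro sum.cong refl) (simp add: case_prod_unfold)
  also have "\<dots> = (if i = 0 then 0 else sum_list (map (\<lambda>(l, j). alab_val b l * F (length P - j)) (P ! (i - 1))))"
    using assms by (cases i) (simp_all add: sum.delta')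
  finally show ?thesis .
qed

lemma walk_sum_abp_of_lp:
  assumes wf: "wf_lp p n P" and "i \<le> length P"
  shows "walk_sum (abp_of_lp P) b (length P - i) = lp_vals 1 b P ! i"
  using assms(2)
proof (induction i rule: less_induct)
  case (less i)
  have rec: "walk_sum (abp_of_lp P) b (length P - i) = (if i = 0 then 1
      else sum_list (map (\<lambda>(l, j). alab_val b l * walk_sum (abp_of_lp P) b (length P - j)) (P ! (i - 1))))"
    using walk_sum_rec_list[OF wf_abp_of_lp[OF wf], of b "length P - i"] out_sum_abp_of_lp[OF less.prems]
      less.prems by (cases "i = 0") simp_all
  show ?case
  proof (cases i)
    case (Suc k)
    have "sum_list (map (\<lambda>(l, j). alab_val b l * walk_sum (abp_of_lp P) b (length P - j)) (P ! k))
        = lin_comb b (lp_vals 1 b P) (P ! k)"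
      unfolding lin_comb_def
    proof (intro arg_cong[where f = sum_list] map_cong refl, clarify)
      fix l j assume "(l, j) \<in> set (P ! k)"
      then have "j \<le> k" using wf_lpD[OF wf] Suc less.prems by simp
      then show "alab_val b l * walk_sum (abp_of_lp P) b (length P - j) = alab_val b l * lp_vals 1 b P ! j"
        using less.IH[of j] Suc less.prems by simp
    qed
    then show ?thesis using rec Suc lp_vals_nth_Suc[OF wf, of k] less.prems by simp
  qed (use rec in simp)
qed

lemma abp_value_abp_of_lp: "wf_lp p n P \<Longrightarrow> abp_value p (abp_of_lp P) b = lp_value b P mod p"
  using walk_sum_abp_of_lp[of p n P "length P" b] by (simp add: abp_value_walk_sum lp_value_def)

text \<open>Vertex \<open>u\<close> becomes node \<open>nv G - 1 - u\<close>; its row lists the out-edges of \<open>u\<close>.\<close>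

definition lp_of_abp :: "abp \<Rightarrow> lin_prog" where
  "lp_of_abp G = map (\<lambda>k. map (\<lambda>(u, v, l). (l, nv G - 1 - v)) (filter (\<lambda>e. fst e = nv G - 2 - k) (edges G)))
     [0..<nv G - 1]"

lemma length_lp_of_abp [simp]: "length (lp_of_abp G) = nv G - 1"
  by (simp add: lp_of_abp_def)

lemma lp_of_abp_nth:
  "k < nv G - 1 \<Longrightarrow>
    lp_of_abp G ! k = map (\<lambda>(u, v, l). (l, nv G - 1 - v)) (filter (\<lambda>e. fst e = nv G - 2 - k) (edges G))"
  by (simp add: lp_of_abp_def)

lemma wf_lp_of_abp: "wf_abp p n G \<Longrightarrow> wf_lp p n (lp_of_abp G)"
  unfolding wf_lp_def by (fastforce simp: lp_of_abp_nth dest: wf_abp_edge)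

lemma sum_length_filter_le:
  assumes "finite K" "\<And>x. card {k \<in> K. P k x} \<le> 1"
  shows "(\<Sum>k \<in> K. length (filter (P k) xs)) \<le> length xs"
proof (induction xs)
  case (Cons x xs)
  have "(\<Sum>k \<in> K. length (filter (P k) (x # xs)))
      = (\<Sum>k \<in> K. if P k x then 1 else 0) + (\<Sum>k \<in> K. length (filter (P k) xs))"
    by (subst sum.distrib[symmetric]) (rule sum.cong; simp)
  also have "(\<Sum>k \<in> K. if P k x then 1 else 0) = card {k \<in> K. P k x}"
    using sum.inter_filter[OF assms(1), of "\<lambda>_. 1 :: nat" "\<lambda>k. P k x"] by simp
  finally show ?case using Cons assms(2)[of x] by simp
qed simp

lemma lp_size_lp_of_abp: "lp_size (lp_of_abp G) \<le> abp_size G"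
proof -
  have "card {k \<in> {..<nv G - 1}. fst e = nv G - 2 - k} \<le> card {nv G - 2 - fst e}" for e :: "nat \<times> nat \<times> alab"
    by (rule card_mono) auto
  then have "(\<Sum>k < nv G - 1. length (filter (\<lambda>e. fst e = nv G - 2 - k) (edges G))) \<le> length (edges G)"
    by (intro sum_length_filter_le) auto
  then show ?thesis
    by (simp add: lp_size_def abp_size_def lp_of_abp_def comp_def interv_sum_list_conv_sum_set_nat
        atLeast0LessThan)
qed

lemma lp_vals_lp_of_abp:
  assumes wf: "wf_abp p n G" and "i < nv G"
  shows "lp_vals 1 b (lp_of_abp G) ! i = walk_sum G b (nv G - 1 - i)"
  using assms(2)
proof (induction i rule: less_induct)
  case (less i)
  show ?case
  proof (cases i)
    case 0
    have "sum_list (map (\<lambda>(u, v, l). if u = nv G - 1 then alab_val b l * walk_sum G b v else 0) (edges G)) = 0"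
      by (rule sum_list_eq_0_iff[THEN iffD2]) (auto dest: wf_abp_edge[OF wf])
    then show ?thesis using 0 walk_sum_rec_list[OF wf, of b "nv G - 1"] by simp
  next
    case (Suc k)
    let ?out = "filter (\<lambda>e. fst e = nv G - 2 - k) (edges G)"
    have k: "k < nv G - 1" using Suc less.prems by simp
    have "lp_vals 1 b (lp_of_abp G) ! i
        = sum_list (map (\<lambda>(u, v, l). alab_val b l * lp_vals 1 b (lp_of_abp G) ! (nv G - 1 - v)) ?out)"
      using lp_vals_nth_Suc[OF wf_lp_of_abp[OF wf]] k Suc
      by (simp add: lp_of_abp_nth lin_comb_def comp_def case_prod_unfold)
    also have "\<dots> = sum_list (map (\<lambda>(u, v, l). alab_val b l * walk_sum G b v) ?out)"
    proof (intro arg_cong[where f = sum_list] map_cong refl, clarify)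
      fix u v l assume "(u, v, l) \<in> set ?out"
      then have "u = nv G - 2 - k" "u < v" "v < nv G" using wf_abp_edge[OF wf] by fastforce+
      then show "alab_val b l * lp_vals 1 b (lp_of_abp G) ! (nv G - 1 - v) = alab_val b l * walk_sum G b v"
        using less.IH[of "nv G - 1 - v"] Suc k by simp
    qed
    also have "\<dots> = walk_sum G b (nv G - 1 - i)"
      using walk_sum_rec_list[OF wf, of b "nv G - 1 - i"] Suc k
      by (simp add: sum_list_map_filter' case_prod_unfold cong: if_cong)
    finally show ?thesis .
  qed
qed

lemma abp_value_lp_of_abp: "wf_abp p n G \<Longrightarrow> abp_value p G b = lp_value b (lp_of_abp G) mod p"
  using lp_vals_lp_of_abp[of p n G "nv G - 1" b] unfolding wf_abp_def
  by (simp add: abp_value_walk_sum lp_value_def)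

lemma lp_computable_abp_value: "wf_abp p n G \<Longrightarrow> lp_computable p n (abp_size G) (abp_value p G)"
  unfolding lp_computable_def
  by (rule exI[of _ "lp_of_abp G"]) (simp add: wf_lp_of_abp lp_size_lp_of_abp abp_value_lp_of_abp)

lemma abp_of_lp_computable:
  assumes "lp_computable p n s f"
  obtains G where "wf_abp p n G" "abp_size G \<le> s + 1" "\<And>w. length w = n \<Longrightarrow> abp_value p G w = f w mod p"
  using assms unfolding lp_computable_def
  by (metis wf_abp_of_lp abp_size_abp_of_lp abp_value_abp_of_lp add_le_mono1 Suc_eq_plus1)

lemma abp_value_less: "0 < p \<Longrightarrow> abp_value p G w < p"
  by (simp add: abp_value_def)

section \<open>Circuits running linear programs\<close>

lemma circuit_vals_Nil [simp]: "circuit_vals A [] x = []"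
  and circuit_vals_snoc [simp]:
    "circuit_vals A (c @ [nd]) x = circuit_vals A c x @ [cnode_val A x (circuit_vals A c x) nd]"
  by (simp_all add: circuit_vals_def)

lemma circuit_vals_single [simp]: "circuit_vals A [nd] x = [cnode_val A x [] nd]"
  by (simp add: circuit_vals_def)

lemma length_circuit_vals [simp]: "length (circuit_vals A c x) = length c"
  by (induction c rule: rev_induct) auto

lemma circuit_vals_append_nth: "k < length c \<Longrightarrow> circuit_vals A (c @ d) x ! k = circuit_vals A c x ! k"
proof (induction d rule: rev_induct)
  case (snoc nd d)
  then show ?case by (simp add: nth_append flip: append_assoc)
qed simp

lemma circuit_vals_snoc_nth_last:
  "circuit_vals A (c @ [nd]) x ! length c = cnode_val A x (circuit_vals A c x) nd"
  by (simp add: nth_append)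

lemma circuit_eval_conv_nth:
  assumes "c \<noteq> []"
  shows "circuit_eval A c x = circuit_vals A c x ! (length c - 1)"
proof -
  have "circuit_vals A c x \<noteq> []" using assms length_circuit_vals[of A c x] by (metis length_0_conv)
  then show ?thesis unfolding circuit_eval_def by (simp add: last_conv_nth)
qed

definition wf_cnodes :: "alg \<Rightarrow> nat \<Rightarrow> cnode list \<Rightarrow> bool" where
  "wf_cnodes A n c \<longleftrightarrow> (\<forall>k < length c. wf_cnode A n k (c ! k))"

lemma wf_cnodes_snoc: "wf_cnodes A n (c @ [nd]) \<longleftrightarrow> wf_cnodes A n c \<and> wf_cnode A n (length c) nd"
  unfolding wf_cnodes_def by (auto simp: nth_append less_Suc_eq)

lemma circuit_iff_wf_cnodes: "circuit A n c \<longleftrightarrow> c \<noteq> [] \<and> wf_cnodes A n c"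
  by (simp add: circuit_def wf_cnodes_def)

lemma circuit_size_append [simp]: "circuit_size (c @ d) = circuit_size c + circuit_size d"
  and circuit_size_single [simp]: "circuit_size [nd] = Suc (cnode_edges nd)"
  by (simp_all add: circuit_size_def)

text \<open>To simulate a linear program, a Boolean input is encoded as \<open>(b, 0)\<close> and a program value
  \<open>v\<close> is carried as \<open>(0, v)\<close>; then \<open>mult_add_op\<close> applied to a label, a value and an
  accumulator performs one step \<open>s + l * v\<close> of a linear combination.\<close>

definition input_enc :: "nat \<Rightarrow> bool \<Rightarrow> nat" where
  "input_enc p b = enc p (if b then 1 else 0) 0"

definition label_node :: "nat \<Rightarrow> alab \<Rightarrow> cnode" where
  "label_node p l = (case l of LVar i \<Rightarrow> CInp i | LConst a \<Rightarrow> CConst (enc p a 0))"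

lemma cnode_val_label_node:
  assumes "1 < p" "wf_alab p n l" "length w = n"
  shows "cnode_val (Zp2 p) (map (input_enc p) w) vs (label_node p l) = enc p (alab_val w l) 0"
  using assms by (cases l) (auto simp: label_node_def wf_alab_def input_enc_def)

lemma wf_cnode_label_node: "1 < p \<Longrightarrow> wf_alab p n l \<Longrightarrow> wf_cnode (Zp2 p) n k (label_node p l)"
  by (cases l) (auto simp: label_node_def wf_alab_def enc_less)

lemma alab_val_less: "1 < p \<Longrightarrow> wf_alab p n l \<Longrightarrow> alab_val w l < p"
  by (cases l) (auto simp: wf_alab_def)

definition carries_lp_vals :: "nat \<Rightarrow> nat \<Rightarrow> cnode list \<Rightarrow> lin_prog \<Rightarrow> (nat \<Rightarrow> nat) \<Rightarrow> bool" where
  "carries_lp_vals p n c P pos \<longleftrightarrow> (\<forall>i \<le> length P. pos i < length c) \<and>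
     (\<forall>w. length w = n \<longrightarrow> (\<forall>i \<le> length P.
        circuit_vals (Zp2 p) c (map (input_enc p) w) ! pos i = enc p 0 (lp_vals 1 w P ! i mod p)))"

lemma carries_lp_vals_append:
  "carries_lp_vals p n c P pos \<Longrightarrow> carries_lp_vals p n (c @ d) P pos"
  unfolding carries_lp_vals_def by (auto simp: circuit_vals_append_nth)

lemma wf_cnodes_mult_add_step:
  assumes "1 < p" "wf_cnodes (Zp2 p) n e" "e \<noteq> []" "q < length e" "wf_alab p n l"
  shows "wf_cnodes (Zp2 p) n (e @ [label_node p l, CGate 1 [length e, q, length e - 1]])"
proof -
  have "wf_cnodes (Zp2 p) n ((e @ [label_node p l]) @ [CGate 1 [length e, q, length e - 1]])"
    unfolding wf_cnodes_snoc using assms wf_cnode_label_node by (auto simp: arity_Zp2)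
  then show ?thesis by simp
qed

lemma circuit_vals_mult_add_step:
  assumes p: "1 < p" and l: "wf_alab p n l" and w: "length w = n" and e: "e \<noteq> []" "q < length e"
    and acc: "circuit_vals (Zp2 p) e (map (input_enc p) w) ! (length e - 1) = enc p 0 (s mod p)"
    and v: "circuit_vals (Zp2 p) e (map (input_enc p) w) ! q = enc p 0 (v mod p)"
  shows "circuit_vals (Zp2 p) (e @ [label_node p l, CGate 1 [length e, q, length e - 1]]) (map (input_enc p) w)
    ! (length e + 1) = enc p 0 ((s + alab_val w l * v) mod p)"
proof -
  let ?e' = "e @ [label_node p l]" and ?gate = "CGate 1 [length e, q, length e - 1]"
  let ?V = "circuit_vals (Zp2 p) ?e' (map (input_enc p) w)"
  have "?V ! length e = enc p (alab_val w l) 0"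
    unfolding circuit_vals_snoc_nth_last by (rule cnode_val_label_node[OF p l w])
  moreover have "?V ! q = enc p 0 (v mod p)" "?V ! (length e - 1) = enc p 0 (s mod p)"
    using e acc v by (simp_all add: nth_append)
  moreover have "circuit_vals (Zp2 p) (?e' @ [?gate]) (map (input_enc p) w) ! length ?e'
      = mult_add_op p [?V ! length e, ?V ! q, ?V ! (length e - 1)]"
    by (rule trans[OF circuit_vals_snoc_nth_last]) (simp del: circuit_vals_snoc)
  moreover have "[s mod p + alab_val w l * (v mod p) = s + alab_val w l * v] (mod p)"
    by (intro cong_add cong_scalar_left) (simp_all add: cong_def)
  ultimately have "circuit_vals (Zp2 p) (?e' @ [?gate]) (map (input_enc p) w) ! length ?e'
      = enc p 0 ((s + alab_val w l * v) mod p)"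
    using p alab_val_less[OF p l] by (simp only:) (simp add: mult_add_op_enc cong_def)
  then show ?thesis by simp
qed

lemma circuit_of_lin_comb:
  assumes p: "1 < p" and c: "wf_cnodes (Zp2 p) n c" "carries_lp_vals p n c P pos"
    and ts: "\<forall>(l, j) \<in> set ts. j \<le> length P \<and> wf_alab p n l"
  shows "\<exists>d. d \<noteq> [] \<and> wf_cnodes (Zp2 p) n (c @ d) \<and> circuit_size d \<le> 1 + 5 * length ts \<and>
    (\<forall>w. length w = n \<longrightarrow> circuit_vals (Zp2 p) (c @ d) (map (input_enc p) w) ! (length c + length d - 1)
       = enc p 0 (lin_comb w (lp_vals 1 w P) ts mod p))"
  using ts
proof (induction ts rule: rev_induct)
  case Nil
  show ?case
    by (rule exI[of _ "[CConst (enc p 0 0)]"]) (use p c in \<open>simp add: wf_cnodes_snoc enc_less nth_append\<close>)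
next
  case (snoc t ts)
  obtain l j where t: "t = (l, j)" by (cases t)
  have lj: "j \<le> length P" "wf_alab p n l" using snoc.prems t by auto
  obtain d where d: "d \<noteq> []" "wf_cnodes (Zp2 p) n (c @ d)" "circuit_size d \<le> 1 + 5 * length ts"
    "\<forall>w. length w = n \<longrightarrow> circuit_vals (Zp2 p) (c @ d) (map (input_enc p) w) ! (length c + length d - 1)
       = enc p 0 (lin_comb w (lp_vals 1 w P) ts mod p)"
    using snoc by auto
  have pos: "pos j < length (c @ d)" using c(2) lj(1) by (simp add: carries_lp_vals_def trans_less_add1)
  let ?d = "d @ [label_node p l, CGate 1 [length (c @ d), pos j, length (c @ d) - 1]]"
  show ?case
  proof (intro exI conjI allI impI)
    show "?d \<noteq> []" by simp
    show "wf_cnodes (Zp2 p) n (c @ ?d)"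
      using wf_cnodes_mult_add_step[OF p d(2) _ pos lj(2)] d(1) by simp
    show "circuit_size ?d \<le> 1 + 5 * length (ts @ [t])"
      using d(3) by (cases l) (simp_all add: label_node_def circuit_size_def)
    fix w :: "bool list" assume w: "length w = n"
    have "circuit_vals (Zp2 p) (c @ d) (map (input_enc p) w) ! pos j = enc p 0 (lp_vals 1 w P ! j mod p)"
      using c(2) lj(1) w circuit_vals_append_nth[of "pos j" c] by (simp add: carries_lp_vals_def)
    then show "circuit_vals (Zp2 p) (c @ ?d) (map (input_enc p) w) ! (length c + length ?d - 1)
        = enc p 0 (lin_comb w (lp_vals 1 w P) (ts @ [t]) mod p)"
      using circuit_vals_mult_add_step[OF p lj(2) w _ pos] d(1,4) w
      by (simp add: t lin_comb_append lin_comb_def)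
  qed
qed

lemma carries_lp_vals_snoc:
  assumes c: "carries_lp_vals p n c P pos" and d: "d \<noteq> []"
    and last: "\<And>w. length w = n \<Longrightarrow> circuit_vals (Zp2 p) (c @ d) (map (input_enc p) w) ! (length c + length d - 1)
      = enc p 0 (lin_comb w (lp_vals 1 w P) ts mod p)"
  shows "carries_lp_vals p n (c @ d) (P @ [ts]) (pos(Suc (length P) := length c + length d - 1))"
  unfolding carries_lp_vals_def
proof (intro conjI allI impI)
  fix i assume "i \<le> length (P @ [ts])"
  then show "(pos(Suc (length P) := length c + length d - 1)) i < length (c @ d)"
    using c d by (cases "i = Suc (length P)") (auto simp: carries_lp_vals_def trans_less_add1)
next
  fix w :: "bool list" and i assume w: "length w = n" and i: "i \<le> length (P @ [ts])"
  show "circuit_vals (Zp2 p) (c @ d) (map (input_enc p) w) ! (pos(Suc (length P) := length c + length d - 1)) i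
      = enc p 0 (lp_vals 1 w (P @ [ts]) ! i mod p)"
  proof (cases "i = Suc (length P)")
    case True
    then show ?thesis using last[OF w] by (simp add: nth_append)
  next
    case False
    then show ?thesis
      using i w carries_lp_vals_append[OF c, of d] lp_vals_append_nth[of i P 1 w "[ts]"]
      by (simp add: carries_lp_vals_def)
  qed
qed

lemma circuit_of_lp:
  assumes p: "1 < p" and "wf_lp p n P"
  shows "\<exists>c pos. c \<noteq> [] \<and> wf_cnodes (Zp2 p) n c \<and> circuit_size c \<le> 5 * lp_size P + 1 \<and>
    carries_lp_vals p n c P pos \<and> pos (length P) = length c - 1"
  using assms(2)
proof (induction P rule: rev_induct)
  case Nil
  show ?case
    by (rule exI[of _ "[CConst (enc p 0 1)]"], rule exI[of _ "\<lambda>_. 0"])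
       (use p in \<open>simp add: wf_cnodes_def carries_lp_vals_def enc_less\<close>)
next
  case (snoc ts P)
  have wf: "wf_lp p n P" and ts: "\<forall>(l, j) \<in> set ts. j \<le> length P \<and> wf_alab p n l"
    using snoc.prems by (simp_all add: wf_lp_snoc)
  obtain c pos where c: "c \<noteq> []" "wf_cnodes (Zp2 p) n c" "circuit_size c \<le> 5 * lp_size P + 1"
    "carries_lp_vals p n c P pos"
    using snoc.IH[OF wf] by blast
  obtain d where d: "d \<noteq> []" "wf_cnodes (Zp2 p) n (c @ d)" "circuit_size d \<le> 1 + 5 * length ts"
    "\<forall>w. length w = n \<longrightarrow> circuit_vals (Zp2 p) (c @ d) (map (input_enc p) w) ! (length c + length d - 1)
       = enc p 0 (lin_comb w (lp_vals 1 w P) ts mod p)"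
    using circuit_of_lin_comb[OF p c(2,4) ts] by blast
  let ?pos = "pos(Suc (length P) := length c + length d - 1)"
  show ?case
  proof (intro exI[of _ "c @ d"] exI[of _ ?pos] conjI)
    show "carries_lp_vals p n (c @ d) (P @ [ts]) ?pos"
      using carries_lp_vals_snoc[OF c(4) d(1)] d(4) by blast
  qed (use c d in simp_all)
qed

lemma lp_computable_circuit:
  assumes p: "1 < p" and "lp_computable p n s f"
  obtains c where "circuit (Zp2 p) n c" "circuit_size c \<le> 5 * s + 1"
    "\<And>w. length w = n \<Longrightarrow> circuit_eval (Zp2 p) c (map (input_enc p) w) = enc p 0 (f w mod p)"
proof -
  obtain P where P: "wf_lp p n P" "lp_size P \<le> s" "\<And>w. length w = n \<Longrightarrow> lp_value w P mod p = f w mod p"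
    using assms(2) unfolding lp_computable_def by blast
  obtain c pos where c: "c \<noteq> []" "wf_cnodes (Zp2 p) n c" "circuit_size c \<le> 5 * lp_size P + 1"
    "carries_lp_vals p n c P pos" "pos (length P) = length c - 1"
    using circuit_of_lp[OF p P(1)] by blast
  show ?thesis
  proof
    show "circuit (Zp2 p) n c" using c by (simp add: circuit_iff_wf_cnodes)
    show "circuit_size c \<le> 5 * s + 1" using c(3) P(2) by simp
    fix w :: "bool list" assume w: "length w = n"
    have "circuit_vals (Zp2 p) c (map (input_enc p) w) ! pos (length P)
        = enc p 0 (lp_vals 1 w P ! length P mod p)"
      using c(4) w unfolding carries_lp_vals_def by blast
    then show "circuit_eval (Zp2 p) c (map (input_enc p) w) = enc p 0 (f w mod p)"
      using c(1,5) P(3)[OF w] by (simp add: circuit_eval_conv_nth lp_value_def)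
  qed
qed

section \<open>Linear programs simulating circuits\<close>

definition aff_eval :: "bool list \<Rightarrow> nat \<times> (nat \<Rightarrow> nat) \<Rightarrow> nat" where
  "aff_eval w a = fst a + (\<Sum>j < length w. snd a j * (if w ! j then 1 else 0))"

lemma aff_eval_const [simp]: "aff_eval w (c, \<lambda>_. 0) = c"
  by (simp add: aff_eval_def)

lemma aff_eval_single:
  "i < length w \<Longrightarrow> aff_eval w (c, \<lambda>m. if m = i then d else 0) = c + d * (if w ! i then 1 else 0)"
  by (simp add: aff_eval_def if_distrib[of "\<lambda>x. x * _"] cong: if_cong)

lemma aff_eval_malcev:
  "aff_eval w (fst a + q * fst a' + fst a'', \<lambda>m. snd a m + q * snd a' m + snd a'' m)
     = aff_eval w a + q * aff_eval w a' + aff_eval w a''"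
  by (simp add: aff_eval_def algebra_simps sum.distrib sum_distrib_left)

text \<open>The first coordinate of every node of a circuit over \<open>Zp2 p\<close> is an affine function \<open>aff k\<close> of
  the input bits, since the first projection maps onto an affine algebra; only the second coordinate
  needs the linear program.\<close>

definition lp_simulates ::
    "nat \<Rightarrow> nat \<Rightarrow> (bool \<Rightarrow> nat) \<Rightarrow> cnode list \<Rightarrow> lin_prog \<Rightarrow> (nat \<Rightarrow> nat) \<Rightarrow> (nat \<Rightarrow> nat \<times> (nat \<Rightarrow> nat)) \<Rightarrow> bool" where
  "lp_simulates p n \<iota> c P pos aff \<longleftrightarrow> wf_lp p n P \<and> (\<forall>k < length c. pos k \<le> length P) \<and>
     (\<forall>w. length w = n \<longrightarrow> (\<forall>k < length c.
        circuit_vals (Zp2 p) c (map \<iota> w) ! k = enc p (aff_eval w (aff k) mod p) (lp_vals 1 w P ! pos k mod p)))"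

lemma lp_simulates_Nil: "lp_simulates p n \<iota> [] [] pos aff"
  by (simp add: lp_simulates_def)

lemma lp_simulatesD:
  assumes "lp_simulates p n \<iota> c P pos aff" "k < length c"
  shows "pos k \<le> length P"
    and "length w = n \<Longrightarrow> circuit_vals (Zp2 p) c (map \<iota> w) ! k
      = enc p (aff_eval w (aff k) mod p) (lp_vals 1 w (P @ Q) ! pos k mod p)"
  using assms lp_vals_append_nth[of "pos k" P 1 w Q] by (auto simp: lp_simulates_def)

lemma lp_simulates_snoc:
  assumes sim: "lp_simulates p n \<iota> c P pos aff"
    and wf: "wf_lp p n (P @ Q)" and new: "new \<le> length (P @ Q)"
    and val: "\<And>w. length w = n \<Longrightarrow> cnode_val (Zp2 p) (map \<iota> w) (circuit_vals (Zp2 p) c (map \<iota> w)) nd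
       = enc p (aff_eval w a mod p) (lp_vals 1 w (P @ Q) ! new mod p)"
  shows "lp_simulates p n \<iota> (c @ [nd]) (P @ Q) (pos(length c := new)) (aff(length c := a))"
  unfolding lp_simulates_def
proof (intro conjI allI impI)
  fix k assume "k < length (c @ [nd])"
  then show "(pos(length c := new)) k \<le> length (P @ Q)"
    using lp_simulatesD(1)[OF sim, of k] new by (cases "k = length c") (auto simp: less_Suc_eq)
next
  fix w :: "bool list" and k assume w: "length w = n" and "k < length (c @ [nd])"
  then consider "k = length c" | "k < length c" by fastforce
  then show "circuit_vals (Zp2 p) (c @ [nd]) (map \<iota> w) ! k
      = enc p (aff_eval w ((aff(length c := a)) k) mod p)
          (lp_vals 1 w (P @ Q) ! (pos(length c := new)) k mod p)"
  proof cases
    case 1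
    then show ?thesis by (simp add: nth_append val[OF w])
  next
    case 2
    then show ?thesis using lp_simulatesD(2)[OF sim 2 w] by (simp add: nth_append)
  qed
qed (use wf in simp)

text \<open>The affine function \<open>y\<^sub>0 + (y\<^sub>1 - y\<^sub>0) w\<^sub>i\<close> and rows computing the same function,
  both selecting \<open>y\<^sub>0\<close> or \<open>y\<^sub>1\<close> according to the input bit \<open>w\<^sub>i\<close>.\<close>

definition select_aff :: "nat \<Rightarrow> nat \<Rightarrow> nat \<Rightarrow> nat \<Rightarrow> nat \<times> (nat \<Rightarrow> nat)" where
  "select_aff p i y0 y1 = (y0, \<lambda>m. if m = i then zp_malcev p y1 y0 0 else 0)"

definition select_rows :: "nat \<Rightarrow> nat \<Rightarrow> nat \<Rightarrow> nat \<Rightarrow> nat \<Rightarrow> lin_prog" where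
  "select_rows p i y0 y1 m = [[(LVar i, 0)], [(LConst y0, 0), (LConst (zp_malcev p y1 y0 0), Suc m)]]"

lemma aff_eval_select_aff:
  "y0 < p \<Longrightarrow> y1 < p \<Longrightarrow> i < length w \<Longrightarrow> aff_eval w (select_aff p i y0 y1) mod p = (if w ! i then y1 else y0)"
  by (simp add: select_aff_def aff_eval_single zp_malcev_select)

lemma lp_vals_select_rows:
  assumes "y0 < p" "y1 < p"
  shows "lp_vals 1 w (P @ select_rows p i y0 y1 (length P)) ! (length P + 2) mod p = (if w ! i then y1 else y0)"
proof -
  let ?R = "P @ [[(LVar i, 0)]]"
  have "lp_vals 1 w (?R @ [[(LConst y0, 0), (LConst (zp_malcev p y1 y0 0), Suc (length P))]]) ! Suc (length ?R)
      = y0 + zp_malcev p y1 y0 0 * (if w ! i then 1 else 0)"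
    unfolding lp_vals_snoc_nth_last by (simp add: nth_append lin_comb_def)
  then show ?thesis using assms by (simp add: select_rows_def zp_malcev_select)
qed

lemma lp_size_select_rows [simp]: "lp_size (select_rows p i y0 y1 m) = 5"
  by (simp add: select_rows_def)

lemma wf_lp_select_rows:
  assumes "wf_lp p n P" "i < n" "y0 < p" "0 < p"
  shows "wf_lp p n (P @ select_rows p i y0 y1 (length P))"
proof -
  have "P @ select_rows p i y0 y1 (length P)
      = (P @ [[(LVar i, 0)]]) @ [[(LConst y0, 0), (LConst (zp_malcev p y1 y0 0), Suc (length P))]]"
    by (simp add: select_rows_def)
  then show ?thesis
    using assms by (simp only:) (simp add: wf_lp_snoc wf_alab_def zp_malcev_less del: append_assoc)
qed

lemma lp_simulates_input:
  assumes p: "1 < p" and \<iota>: "\<And>b. \<iota> b < p * p" and sim: "lp_simulates p n \<iota> c P pos aff" and i: "i < n"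
  shows "lp_simulates p n \<iota> (c @ [CInp i]) (P @ select_rows p i (lo p (\<iota> False)) (lo p (\<iota> True)) (length P))
    (pos(length c := length P + 2)) (aff(length c := select_aff p i (hi p (\<iota> False)) (hi p (\<iota> True))))"
proof (rule lp_simulates_snoc[OF sim])
  have p0: "0 < p" using p by simp
  show "wf_lp p n (P @ select_rows p i (lo p (\<iota> False)) (lo p (\<iota> True)) (length P))"
    using sim i p0 by (intro wf_lp_select_rows) (simp_all add: lp_simulates_def lo_less)
  show "length P + 2 \<le> length (P @ select_rows p i (lo p (\<iota> False)) (lo p (\<iota> True)) (length P))"
    by (simp add: select_rows_def)
  fix w :: "bool list" assume w: "length w = n"
  have "aff_eval w (select_aff p i (hi p (\<iota> False)) (hi p (\<iota> True))) mod p = hi p (\<iota> (w ! i))"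
    using aff_eval_select_aff[of "hi p (\<iota> False)" p "hi p (\<iota> True)" i w] w i p0
    by (cases "w ! i") (simp_all add: hi_less)
  moreover have "lp_vals 1 w (P @ select_rows p i (lo p (\<iota> False)) (lo p (\<iota> True)) (length P))
      ! (length P + 2) mod p = lo p (\<iota> (w ! i))"
    using lp_vals_select_rows[of "lo p (\<iota> False)" p "lo p (\<iota> True)" w P i] p0
    by (cases "w ! i") (simp_all add: lo_less)
  ultimately show "cnode_val (Zp2 p) (map \<iota> w) (circuit_vals (Zp2 p) c (map \<iota> w)) (CInp i)
      = enc p (aff_eval w (select_aff p i (hi p (\<iota> False)) (hi p (\<iota> True))) mod p)
          (lp_vals 1 w (P @ select_rows p i (lo p (\<iota> False)) (lo p (\<iota> True)) (length P))
             ! (length P + 2) mod p)"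
    using w i \<iota> by (simp add: enc_hi_lo)
qed

lemma lp_simulates_const:
  assumes p: "1 < p" and sim: "lp_simulates p n \<iota> c P pos aff" and a: "a < p * p"
  shows "lp_simulates p n \<iota> (c @ [CConst a]) (P @ [[(LConst (lo p a), 0)]])
    (pos(length c := length P + 1)) (aff(length c := (hi p a, \<lambda>_. 0)))"
proof (rule lp_simulates_snoc[OF sim])
  show "wf_lp p n (P @ [[(LConst (lo p a), 0)]])"
    using sim p by (simp add: lp_simulates_def wf_lp_snoc wf_alab_def lo_less)
qed (use a p in \<open>simp_all add: lin_comb_def nth_append hi_less lo_less enc_hi_lo\<close>)

lemma lp_simulates_malcev:
  assumes p: "1 < p" and sim: "lp_simulates p n \<iota> c P pos aff"
    and args: "u < length c" "v < length c" "x < length c"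
  shows "lp_simulates p n \<iota> (c @ [CGate 0 [u, v, x]])
    (P @ [[(LConst 1, pos u), (LConst (p - 1), pos v), (LConst 1, pos x)]])
    (pos(length c := length P + 1))
    (aff(length c := (fst (aff u) + (p - 1) * fst (aff v) + fst (aff x),
       \<lambda>m. snd (aff u) m + (p - 1) * snd (aff v) m + snd (aff x) m)))"
proof (rule lp_simulates_snoc[OF sim])
  have p0: "0 < p" using p by simp
  show "wf_lp p n (P @ [[(LConst 1, pos u), (LConst (p - 1), pos v), (LConst 1, pos x)]])"
    using sim p args lp_simulatesD(1)[OF sim] by (simp add: lp_simulates_def wf_lp_snoc wf_alab_def)
  fix w :: "bool list" assume w: "length w = n"
  let ?V = "circuit_vals (Zp2 p) c (map \<iota> w)"
  let ?A = "\<lambda>k. aff_eval w (aff k)" and ?S = "\<lambda>k. lp_vals 1 w P ! pos k"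
  have "?V ! k = enc p (?A k mod p) (?S k mod p)" if "k < length c" for k
    using lp_simulatesD(2)[OF sim that w, of "[]"] by simp
  then have "cnode_val (Zp2 p) (map \<iota> w) ?V (CGate 0 [u, v, x])
      = enc p (zp_malcev p (?A u) (?A v) (?A x)) (zp_malcev p (?S u) (?S v) (?S x))"
    using args p0 by (simp add: malcev_op_enc zp_malcev_mod)
  then show "cnode_val (Zp2 p) (map \<iota> w) ?V (CGate 0 [u, v, x])
      = enc p (aff_eval w (fst (aff u) + (p - 1) * fst (aff v) + fst (aff x),
          \<lambda>m. snd (aff u) m + (p - 1) * snd (aff v) m + snd (aff x) m) mod p)
        (lp_vals 1 w (P @ [[(LConst 1, pos u), (LConst (p - 1), pos v), (LConst 1, pos x)]])
           ! (length P + 1) mod p)"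
    by (simp only: aff_eval_malcev) (simp add: zp_malcev_def lin_comb_def nth_append add.assoc)
qed (simp_all add: nth_append)

lemma lp_vals_var_rows:
  assumes "q \<le> length P" "j < m"
  shows "lp_vals 1 w (P @ map (\<lambda>j. [(LVar j, q)]) [0..<m]) ! (length P + 1 + j)
    = (if w ! j then 1 else 0) * lp_vals 1 w P ! q"
  using assms(2)
proof (induction m)
  case (Suc m)
  have split: "P @ map (\<lambda>j. [(LVar j, q)]) [0..<Suc m]
      = (P @ map (\<lambda>j. [(LVar j, q)]) [0..<m]) @ [[(LVar m, q)]]"
    by simp
  show ?case
  proof (cases "j < m")
    case True
    then show ?thesis
      unfolding split using Suc.IH by (simp add: nth_append del: append_assoc)
  next
    case False
    then have "j = m" using Suc.prems by simp
    then show ?thesis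
      unfolding split using lp_vals_snoc_nth_last[of 1 w "P @ map (\<lambda>j. [(LVar j, q)]) [0..<m]" "[(LVar m, q)]"]
        lp_vals_append_nth[OF assms(1), of 1 w "map (\<lambda>j. [(LVar j, q)]) [0..<m]"]
      by (simp add: lin_comb_def del: append_assoc)
  qed
qed simp

lemma wf_lp_var_rows:
  assumes "wf_lp p n P" "q \<le> length P" "m \<le> n"
  shows "wf_lp p n (P @ map (\<lambda>j. [(LVar j, q)]) [0..<m])"
  using assms(3)
proof (induction m)
  case (Suc m)
  have split: "P @ map (\<lambda>j. [(LVar j, q)]) [0..<Suc m]
      = (P @ map (\<lambda>j. [(LVar j, q)]) [0..<m]) @ [[(LVar m, q)]]"
    by simp
  show ?case unfolding split using Suc assms(2) by (simp add: wf_lp_snoc wf_alab_def del: append_assoc)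
qed (simp add: assms(1))

text \<open>Rows appended to a program of length \<open>m\<close> that compute \<open>x + a(w) * y\<close> for an affine function
  \<open>a\<close> of the input bits: the first \<open>n\<close> rows hold \<open>w\<^sub>j * y\<close>, the last row combines them with the
  coefficients of \<open>a\<close>.\<close>

definition aff_mult_rows :: "nat \<Rightarrow> nat \<Rightarrow> nat \<Rightarrow> nat \<times> (nat \<Rightarrow> nat) \<Rightarrow> nat \<Rightarrow> nat \<Rightarrow> lin_prog" where
  "aff_mult_rows p n m a y x = map (\<lambda>j. [(LVar j, y)]) [0..<n] @
     [[(LConst 1, x), (LConst (fst a mod p), y)] @ map (\<lambda>j. (LConst (snd a j mod p), m + 1 + j)) [0..<n]]"

lemma lp_size_map_singleton [simp]: "lp_size (map (\<lambda>j. [f j]) xs) = 2 * length xs"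
  by (induction xs) auto

lemma lp_size_aff_mult_rows [simp]: "lp_size (aff_mult_rows p n m a y x) = 3 * n + 3"
  by (simp add: aff_mult_rows_def)

lemma wf_lp_aff_mult_rows:
  assumes "1 < p" "wf_lp p n P" "y \<le> length P" "x \<le> length P"
  shows "wf_lp p n (P @ aff_mult_rows p n (length P) a y x)"
proof -
  have "wf_lp p n (P @ map (\<lambda>j. [(LVar j, y)]) [0..<n])"
    using assms by (intro wf_lp_var_rows) simp_all
  then show ?thesis
    using assms unfolding aff_mult_rows_def append_assoc[symmetric] wf_lp_snoc
    by (auto simp: wf_alab_def)
qed

lemma lp_vals_aff_mult_rows:
  assumes "y \<le> length P" "x \<le> length P" "length w = n"
  shows "[lp_vals 1 w (P @ aff_mult_rows p n (length P) a y x) ! (length P + n + 1)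
    = lp_vals 1 w P ! x + aff_eval w a * lp_vals 1 w P ! y] (mod p)"
proof -
  let ?R = "P @ map (\<lambda>j. [(LVar j, y)]) [0..<n]"
  let ?fin = "[(LConst 1, x), (LConst (fst a mod p), y)] @
    map (\<lambda>j. (LConst (snd a j mod p), length P + 1 + j)) [0..<n]"
  let ?X = "lp_vals 1 w P ! x" and ?Y = "lp_vals 1 w P ! y" and ?bit = "\<lambda>j. if w ! j then 1 else 0 :: nat"
  have "lp_vals 1 w (P @ aff_mult_rows p n (length P) a y x) ! (length P + n + 1)
      = lin_comb w (lp_vals 1 w ?R) ?fin"
    using lp_vals_snoc_nth_last[of 1 w ?R ?fin] by (simp add: aff_mult_rows_def)
  also have "\<dots> = ?X + (fst a mod p) * ?Y + (\<Sum>j < n. (snd a j mod p) * (?bit j * ?Y))"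
    using assms lp_vals_var_rows[OF assms(1)] lp_vals_append_nth[of _ P 1 w]
    by (simp add: lin_comb_append lin_comb_def interv_sum_list_conv_sum_set_nat atLeast0LessThan comp_def)
  also have "[\<dots> = ?X + fst a * ?Y + (\<Sum>j < n. snd a j * (?bit j * ?Y))] (mod p)"
    by (intro cong_add cong_refl cong_scalar_right cong_sum) (simp_all add: cong_def)
  also have "?X + fst a * ?Y + (\<Sum>j < n. snd a j * (?bit j * ?Y)) = ?X + aff_eval w a * ?Y"
    using assms(3) by (simp add: aff_eval_def algebra_simps sum_distrib_left sum_distrib_right)
  finally show ?thesis .
qed

lemma lp_simulates_mult_add:
  assumes p: "1 < p" and sim: "lp_simulates p n \<iota> c P pos aff"
    and args: "u < length c" "v < length c" "x < length c"
  shows "lp_simulates p n \<iota> (c @ [CGate 1 [u, v, x]]) (P @ aff_mult_rows p n (length P) (aff u) (pos v) (pos x))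
    (pos(length c := length P + n + 1)) (aff(length c := aff x))"
proof (rule lp_simulates_snoc[OF sim])
  have pos: "pos v \<le> length P" "pos x \<le> length P"
    using lp_simulatesD(1)[OF sim] args by auto
  show "wf_lp p n (P @ aff_mult_rows p n (length P) (aff u) (pos v) (pos x))"
    using sim pos p by (intro wf_lp_aff_mult_rows) (simp_all add: lp_simulates_def)
  show "length P + n + 1 \<le> length (P @ aff_mult_rows p n (length P) (aff u) (pos v) (pos x))"
    by (simp add: aff_mult_rows_def)
  fix w :: "bool list" assume w: "length w = n"
  let ?V = "circuit_vals (Zp2 p) c (map \<iota> w)"
  let ?A = "\<lambda>k. aff_eval w (aff k)" and ?S = "\<lambda>k. lp_vals 1 w P ! pos k"
  have "?V ! k = enc p (?A k mod p) (?S k mod p)" if "k < length c" for k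
    using lp_simulatesD(2)[OF sim that w, of "[]"] by simp
  then have "cnode_val (Zp2 p) (map \<iota> w) ?V (CGate 1 [u, v, x])
      = enc p (?A x mod p) ((?S x mod p + (?A u mod p) * (?S v mod p)) mod p)"
    using args p by (simp add: mult_add_op_enc)
  moreover have "[?S x mod p + (?A u mod p) * (?S v mod p) = ?S x + ?A u * ?S v] (mod p)"
    by (intro cong_add cong_mult) (simp_all add: cong_def)
  ultimately show "cnode_val (Zp2 p) (map \<iota> w) ?V (CGate 1 [u, v, x])
      = enc p (aff_eval w (aff x) mod p)
          (lp_vals 1 w (P @ aff_mult_rows p n (length P) (aff u) (pos v) (pos x)) ! (length P + n + 1) mod p)"
    using lp_vals_aff_mult_rows[OF pos w, of p "aff u"] by (simp add: cong_def)
qed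

lemma wf_cnode_Zp2_cases [consumes 1, case_names input const malcev mult_add]:
  assumes "wf_cnode (Zp2 p) n k nd"
  obtains (input) i where "nd = CInp i" "i < n"
    | (const) a where "nd = CConst a" "a < p * p"
    | (malcev) u v x where "nd = CGate 0 [u, v, x]" "u < k" "v < k" "x < k"
    | (mult_add) u v x where "nd = CGate 1 [u, v, x]" "u < k" "v < k" "x < k"
proof (cases nd)
  case (CGate f args)
  then have f: "f = 0 \<or> f = 1" and "length args = 3" and args: "\<forall>i \<in> set args. i < k"
    using assms by (auto simp: arity_Zp2)
  then obtain u v x where "args = [u, v, x]"
    by (auto simp: numeral_3_eq_3 length_Suc_conv)
  then show ?thesis using f args CGate that(3,4) by auto
qed (use assms that(1,2) in auto)

lemma lp_simulation_exists:
  assumes p: "1 < p" and \<iota>: "\<And>b. \<iota> b < p * p" and "wf_cnodes (Zp2 p) n c"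
  shows "\<exists>P pos aff. lp_simulates p n \<iota> c P pos aff \<and> lp_size P \<le> (3 * n + 5) * length c"
  using assms(3)
proof (induction c rule: rev_induct)
  case Nil
  show ?case using lp_simulates_Nil by fastforce
next
  case (snoc nd c)
  have wf: "wf_cnodes (Zp2 p) n c" and nd: "wf_cnode (Zp2 p) n (length c) nd"
    using snoc.prems by (simp_all add: wf_cnodes_snoc)
  obtain P pos aff where sim: "lp_simulates p n \<iota> c P pos aff" and size: "lp_size P \<le> (3 * n + 5) * length c"
    using snoc.IH[OF wf] by blast
  from nd show ?case
  proof (cases rule: wf_cnode_Zp2_cases)
    case (input i)
    show ?thesis
      using lp_simulates_input[OF p \<iota> sim input(2)] unfolding input(1)
      by (intro exI conjI, assumption) (use size in simp)
  next
    case (const a)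
    show ?thesis
      using lp_simulates_const[OF p sim const(2)] unfolding const(1)
      by (intro exI conjI, assumption) (use size in simp)
  next
    case (malcev u v x)
    show ?thesis
      using lp_simulates_malcev[OF p sim malcev(2-4)] unfolding malcev(1)
      by (intro exI conjI, assumption) (use size in simp)
  next
    case (mult_add u v x)
    show ?thesis
      using lp_simulates_mult_add[OF p sim mult_add(2-4)] unfolding mult_add(1)
      by (intro exI conjI, assumption) (use size in simp)
  qed
qed

lemma lp_computable_aff_eval:
  assumes p: "1 < p"
  shows "lp_computable p n (9 * n + 9) (\<lambda>w. aff_eval w a)"
proof -
  have "lp_computable p n (2 + 2) (\<lambda>w. snd a j * (if w ! j then 1 else 0))" if "j < n" for j
    using p that by (intro lp_computable_mult lp_computable_const lp_computable_var) auto
  then have "lp_computable p n (card {..<n} * (2 + 2 + 5) + 2) (\<lambda>w. \<Sum>j < n. snd a j * (if w ! j then 1 else 0))"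
    by (intro lp_computable_sum[OF p]) auto
  then have "lp_computable p n (2 + (card {..<n} * (2 + 2 + 5) + 2) + 5)
      (\<lambda>w. fst a + (\<Sum>j < n. snd a j * (if w ! j then 1 else 0)))"
    using p by (intro lp_computable_add lp_computable_const) auto
  then show ?thesis
    by (rule lp_computable_cong[OF lp_computable_mono]) (simp_all add: aff_eval_def)
qed

lemma lp_computable_lp_vals:
  assumes "1 < p" "wf_lp p n P" "j \<le> length P"
  shows "lp_computable p n (lp_size P + 2) (\<lambda>w. lp_vals 1 w P ! j)"
  unfolding lp_computable_def
  by (rule exI[of _ "P @ [[(LConst 1, j)]]"])
     (use assms in \<open>simp add: wf_lp_snoc wf_alab_def lp_value_snoc lin_comb_def\<close>)

lemma circuit_acceptance_lp_computable:
  assumes p: "prime p" and \<iota>: "\<And>b. \<iota> b < p * p" and c: "circuit (Zp2 p) n c"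
  defines "N \<equiv> (3 * n + 5) * length c + 9 * n + 11"
  shows "lp_computable p n (p * (2 * (p * (p * (N + 7) + 16) + 2) + 5) + 2)
    (\<lambda>w. if circuit_eval (Zp2 p) c (map \<iota> w) \<in> S then 1 else 0)"
proof -
  have p1: "1 < p" using p prime_gt_1_nat by blast
  have "wf_cnodes (Zp2 p) n c" using c by (simp add: circuit_iff_wf_cnodes)
  then obtain P pos aff where sim: "lp_simulates p n \<iota> c P pos aff"
    and size: "lp_size P \<le> (3 * n + 5) * length c"
    using lp_simulation_exists[where \<iota> = \<iota>, OF p1 \<iota>] by blast
  let ?out = "length c - 1"
  let ?A = "\<lambda>w. aff_eval w (aff ?out)" and ?S = "\<lambda>w. lp_vals 1 w P ! pos ?out"
  have out: "?out < length c" using c by (simp add: circuit_iff_wf_cnodes)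
  have "lp_computable p n N ?A"
    using lp_computable_aff_eval[OF p1] by (rule lp_computable_mono) (simp add: N_def)
  moreover have "wf_lp p n P" using sim by (simp add: lp_simulates_def)
  then have "lp_computable p n (lp_size P + 2) ?S"
    using lp_computable_lp_vals[OF p1 _ lp_simulatesD(1)[OF sim out]] by blast
  then have "lp_computable p n N ?S"
    by (rule lp_computable_mono) (use size in \<open>simp add: N_def\<close>)
  ultimately have ind: "lp_computable p n (p * (2 * (p * (p * (N + 7) + 16) + 2) + 5) + 2)
      (\<lambda>w. if (?A w mod p, ?S w mod p) \<in> {(a, b). enc p a b \<in> S} then 1 else 0)"
    by (rule lp_computable_pair_indicator[OF p])
  have "circuit_eval (Zp2 p) c (map \<iota> w) = enc p (?A w mod p) (?S w mod p)" if "length w = n" for w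
    using lp_simulatesD(2)[OF sim out that, of "[]"] c by (simp add: circuit_eval_conv_nth circuit_iff_wf_cnodes)
  then show ?thesis
    by (intro lp_computable_cong[OF ind]) simp
qed

definition poly_bounded :: "(nat \<Rightarrow> nat) \<Rightarrow> bool" where
  "poly_bounded f \<longleftrightarrow> (\<exists>c k. \<forall>n. f n \<le> c * (n + 1) ^ k)"

lemma poly_bounded_const: "poly_bounded (\<lambda>_. c)"
  unfolding poly_bounded_def by (rule exI[of _ c], rule exI[of _ 0]) simp

lemma poly_bounded_id: "poly_bounded (\<lambda>n. n)"
  unfolding poly_bounded_def by (rule exI[of _ 1], rule exI[of _ 1]) simp

lemma poly_bounded_add:
  assumes "poly_bounded f" "poly_bounded g"
  shows "poly_bounded (\<lambda>n. f n + g n)"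
proof -
  obtain c k d l where f: "\<And>n. f n \<le> c * (n + 1) ^ k" and g: "\<And>n. g n \<le> d * (n + 1) ^ l"
    using assms unfolding poly_bounded_def by blast
  have "(n + 1) ^ k \<le> (n + 1) ^ (k + l)" "(n + 1) ^ l \<le> (n + 1) ^ (k + l)" for n :: nat
    by (simp_all add: power_increasing)
  then have "f n + g n \<le> (c + d) * (n + 1) ^ (k + l)" for n
    using f[of n] g[of n] mult_le_mono2 by (fastforce simp: add_mult_distrib intro: le_trans add_mono)
  then show ?thesis unfolding poly_bounded_def by blast
qed

lemma poly_bounded_mult:
  assumes "poly_bounded f" "poly_bounded g"
  shows "poly_bounded (\<lambda>n. f n * g n)"
proof -
  obtain c k d l where f: "\<And>n. f n \<le> c * (n + 1) ^ k" and g: "\<And>n. g n \<le> d * (n + 1) ^ l"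
    using assms unfolding poly_bounded_def by blast
  have "f n * g n \<le> (c * d) * (n + 1) ^ (k + l)" for n
    using mult_le_mono[OF f g, of n n] by (simp add: power_add ac_simps)
  then show ?thesis unfolding poly_bounded_def by blast
qed

lemma poly_bounded_power: "poly_bounded f \<Longrightarrow> poly_bounded (\<lambda>n. f n ^ k)"
proof (induction k)
  case (Suc k)
  then show ?case using poly_bounded_mult[of f "\<lambda>n. f n ^ k"] by simp
qed (simp add: poly_bounded_const)

lemmas poly_bounded_intros =
  poly_bounded_add poly_bounded_mult poly_bounded_power poly_bounded_const poly_bounded_id

lemma nuPI:
  assumes "poly_bounded F"
    and circuits: "\<And>n. \<exists>c. circuit A n c \<and> circuit_size c \<le> F n \<and>
      (\<forall>w. length w = n \<longrightarrow> (circuit_eval A c (map \<iota> w) \<in> S \<longleftrightarrow> w \<in> L))"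
    and "\<iota> True \<in> univ A" "\<iota> False \<in> univ A" "S \<subseteq> univ A"
  shows "L \<in> nuP A"
proof -
  obtain c k where F: "\<And>n. F n \<le> c * (n + 1) ^ k"
    using assms(1) unfolding poly_bounded_def by blast
  let ?good = "\<lambda>n t. circuit A n t \<and> circuit_size t \<le> F n \<and>
    (\<forall>w. length w = n \<longrightarrow> (circuit_eval A t (map \<iota> w) \<in> S \<longleftrightarrow> w \<in> L))"
  have "\<forall>n. \<exists>t. ?good n t" by (intro allI) (rule circuits)
  from choice[OF this] obtain t where t: "\<forall>n. ?good n (t n)"
    by (elim exE) (rule that)
  then have "\<forall>n. circuit A n (t n) \<and> circuit_size (t n) \<le> c * (n + 1) ^ k"
    using F le_trans by blast
  moreover have "circuit_eval A (t (length w)) (map \<iota> w) \<in> S \<longleftrightarrow> w \<in> L" for w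
    using t by simp
  then have "L = {w. nudfa_accepts A t \<iota> S w}"
    by (auto simp: nudfa_accepts_def)
  ultimately show ?thesis
    unfolding nuP_def using assms(3-5) by (intro CollectI exI[of _ t] exI[of _ \<iota>] exI[of _ S]) blast
qed

lemma nuDetI:
  assumes "poly_bounded F"
    and abps: "\<And>n. \<exists>G T. wf_abp p n G \<and> abp_size G \<le> F n \<and> T \<subseteq> {0..<p} \<and>
      (\<forall>w. length w = n \<longrightarrow> (w \<in> L \<longleftrightarrow> abp_value p G w \<in> T))"
  shows "L \<in> nuDet p"
proof -
  obtain c k where F: "\<And>n. F n \<le> c * (n + 1) ^ k"
    using assms(1) unfolding poly_bounded_def by blast
  have "\<exists>G T. wf_abp p n G \<and> abp_size G \<le> c * (n + 1) ^ k \<and> T \<subseteq> {0..<p} \<and>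
      (\<forall>w. length w = n \<longrightarrow> (w \<in> L \<longleftrightarrow> abp_value p G w \<in> T))" for n
  proof -
    obtain G T where "wf_abp p n G" "abp_size G \<le> F n" "T \<subseteq> {0..<p}"
      "\<forall>w. length w = n \<longrightarrow> (w \<in> L \<longleftrightarrow> abp_value p G w \<in> T)"
      using abps[of n] by (elim exE conjE) (rule that)
    then show ?thesis using le_trans[OF _ F] by (intro exI[of _ G] exI[of _ T]) simp
  qed
  then show ?thesis
    unfolding nuDet_def by blast
qed

lemma abp_to_circuit:
  assumes p: "prime p" and G: "wf_abp p n G" "abp_size G \<le> s" and T: "T \<subseteq> {0..<p}"
  obtains c where "circuit (Zp2 p) n c" "circuit_size c \<le> 5 * (p * (p * (s + 7) + 16) + 2) + 1"
    "\<And>w. length w = n \<Longrightarrow> circuit_eval (Zp2 p) c (map (input_enc p) w) = enc p 0 1 \<longleftrightarrow> abp_value p G w \<in> T"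
proof -
  have p1: "1 < p" using p prime_gt_1_nat by blast
  have "lp_computable p n s (abp_value p G)"
    using lp_computable_abp_value[OF G(1)] G(2) by (rule lp_computable_mono)
  then have "lp_computable p n (p * (p * (s + 7) + 16) + 2) (\<lambda>w. if abp_value p G w mod p \<in> T then 1 else 0)"
    using T by (intro lp_computable_indicator[OF p]) auto
  then obtain c where c: "circuit (Zp2 p) n c" "circuit_size c \<le> 5 * (p * (p * (s + 7) + 16) + 2) + 1"
    "\<And>w. length w = n \<Longrightarrow> circuit_eval (Zp2 p) c (map (input_enc p) w)
       = enc p 0 ((if abp_value p G w mod p \<in> T then 1 else 0) mod p)"
    using lp_computable_circuit[OF p1] by blast
  have "enc p 0 0 \<noteq> enc p 0 1" using p1 by (simp add: enc_inject)
  show ?thesis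
  proof (rule that[OF c(1,2)])
    fix w :: "bool list" assume "length w = n"
    then show "circuit_eval (Zp2 p) c (map (input_enc p) w) = enc p 0 1 \<longleftrightarrow> abp_value p G w \<in> T"
      using c(3) \<open>enc p 0 0 \<noteq> enc p 0 1\<close> p1 by (simp add: abp_value_less)
  qed
qed

lemma circuit_to_abp:
  assumes p: "prime p" and \<iota>: "\<And>b. \<iota> b < p * p" and c: "circuit (Zp2 p) n c"
  defines "N \<equiv> (3 * n + 5) * length c + 9 * n + 11"
  obtains G where "wf_abp p n G" "abp_size G \<le> p * (2 * (p * (p * (N + 7) + 16) + 2) + 5) + 3"
    "\<And>w. length w = n \<Longrightarrow> abp_value p G w = 1 \<longleftrightarrow> circuit_eval (Zp2 p) c (map \<iota> w) \<in> S"
proof -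
  have p1: "1 < p" using p prime_gt_1_nat by blast
  obtain G where G: "wf_abp p n G" "abp_size G \<le> p * (2 * (p * (p * (N + 7) + 16) + 2) + 5) + 2 + 1"
    "\<And>w. length w = n \<Longrightarrow> abp_value p G w = (if circuit_eval (Zp2 p) c (map \<iota> w) \<in> S then 1 else 0) mod p"
    using abp_of_lp_computable[OF circuit_acceptance_lp_computable[where \<iota> = \<iota> and S = S, OF p \<iota> c]]
    unfolding N_def by blast
  show ?thesis
  proof (rule that[OF G(1)])
    show "abp_size G \<le> p * (2 * (p * (p * (N + 7) + 16) + 2) + 5) + 3" using G(2) by simp
    fix w :: "bool list" assume "length w = n"
    then show "abp_value p G w = 1 \<longleftrightarrow> circuit_eval (Zp2 p) c (map \<iota> w) \<in> S"
      using G(3) p1 by simp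
  qed
qed

lemma nuDet_subset_nuP:
  assumes p: "prime p"
  shows "nuDet p \<subseteq> nuP (Zp2 p)"
proof
  fix L assume "L \<in> nuDet p"
  then obtain c k where L: "\<forall>n. \<exists>G T. wf_abp p n G \<and> abp_size G \<le> c * (n + 1) ^ k \<and> T \<subseteq> {0..<p} \<and>
      (\<forall>w. length w = n \<longrightarrow> (w \<in> L \<longleftrightarrow> abp_value p G w \<in> T))"
    unfolding nuDet_def by blast
  let ?F = "\<lambda>n. 5 * (p * (p * (c * (n + 1) ^ k + 7) + 16) + 2) + 1"
  show "L \<in> nuP (Zp2 p)"
  proof (rule nuPI)
    show "poly_bounded ?F" by (intro poly_bounded_intros)
    fix n
    obtain G T where G: "wf_abp p n G" "abp_size G \<le> c * (n + 1) ^ k" "T \<subseteq> {0..<p}"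
      and L_n: "\<forall>w. length w = n \<longrightarrow> (w \<in> L \<longleftrightarrow> abp_value p G w \<in> T)"
      using L[THEN spec, of n] by (elim exE conjE) (rule that)
    obtain t where "circuit (Zp2 p) n t" "circuit_size t \<le> ?F n"
      "\<And>w. length w = n \<Longrightarrow> circuit_eval (Zp2 p) t (map (input_enc p) w) = enc p 0 1 \<longleftrightarrow> abp_value p G w \<in> T"
      by (rule abp_to_circuit[OF p G]) (rule that)
    then show "\<exists>t. circuit (Zp2 p) n t \<and> circuit_size t \<le> ?F n \<and>
        (\<forall>w. length w = n \<longrightarrow> (circuit_eval (Zp2 p) t (map (input_enc p) w) \<in> {enc p 0 1} \<longleftrightarrow> w \<in> L))"
      using L_n by (intro exI[of _ t]) simp
  qed (use prime_gt_1_nat[OF p] in \<open>simp_all add: input_enc_def enc_less\<close>)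
qed

lemma nuP_subset_nuDet:
  assumes p: "prime p"
  shows "nuP (Zp2 p) \<subseteq> nuDet p"
proof
  fix L assume "L \<in> nuP (Zp2 p)"
  then obtain t \<iota> S c k where t: "\<forall>n. circuit (Zp2 p) n (t n) \<and> circuit_size (t n) \<le> c * (n + 1) ^ k"
    and \<iota>: "\<iota> True \<in> univ (Zp2 p)" "\<iota> False \<in> univ (Zp2 p)"
    and L: "L = {w. nudfa_accepts (Zp2 p) t \<iota> S w}"
    unfolding nuP_def by (elim CollectE exE conjE) (rule that)
  have \<iota>_less: "\<iota> b < p * p" for b using \<iota> by (cases b) simp_all
  have "length (t n) \<le> c * (n + 1) ^ k" for n
    using t[THEN spec, of n] by (auto simp: circuit_size_def)
  then have "poly_bounded (\<lambda>n. length (t n))"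
    unfolding poly_bounded_def by blast
  let ?F = "\<lambda>n. p * (2 * (p * (p * ((3 * n + 5) * length (t n) + 9 * n + 11 + 7) + 16) + 2) + 5) + 3"
  show "L \<in> nuDet p"
  proof (rule nuDetI)
    show "poly_bounded ?F" by (intro poly_bounded_intros) fact
    fix n
    have "circuit (Zp2 p) n (t n)" using t by simp
    then obtain G where "wf_abp p n G" "abp_size G \<le> ?F n"
      "\<And>w. length w = n \<Longrightarrow> abp_value p G w = 1 \<longleftrightarrow> circuit_eval (Zp2 p) (t n) (map \<iota> w) \<in> S"
      by (rule circuit_to_abp[where \<iota> = \<iota> and S = S, OF p \<iota>_less]) (rule that)
    then show "\<exists>G T. wf_abp p n G \<and> abp_size G \<le> ?F n \<and> T \<subseteq> {0..<p} \<and>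
        (\<forall>w. length w = n \<longrightarrow> (w \<in> L \<longleftrightarrow> abp_value p G w \<in> T))"
      using prime_gt_1_nat[OF p] by (intro exI[of _ G] exI[of _ "{1}"]) (simp add: L nudfa_accepts_def)
  qed
qed

theorem mainTheorem7:
  fixes p :: nat
  assumes "prime p"
  shows "\<exists>A. finite_algebra A \<and> solvable_alg A \<and> has_malcev_term A \<and> nuP A = nuDet p"
proof -
  have "0 < p" using assms prime_gt_0_nat by blast
  then show ?thesis
    using finite_algebra_Zp2 solvable_Zp2 has_malcev_term_Zp2
      nuP_subset_nuDet[OF assms] nuDet_subset_nuP[OF assms]
    by blast
qed

end
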